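(* Let $\Gamma\subset\mathbb{R}^3$ be a smooth surface with unit normal $\mathbf{n}$ (regarded as a column vector) whose mean curvature $H$ satisfies $\sup_\Gamma |H|<\infty$. Let $\mathbf{v}$ and $\mathbf{f}$ be two vector fields on $\Gamma$, and let $u$ and $g$ be two scalar functions on $\Gamma$ (with $u$ of class $C^2$ and $\mathbf{v}$ of class $C^1$). Then, on $\Gamma$, \begin{align*} \|\nabla_\Gamma u-\mathbf{f}\| &\leq \|\nabla \overline{u} - \overline{\mathbf{f}}\|+\|\langle\mathbf{n},\nabla \overline{u}\rangle\|,\\ \|\nabla_\Gamma \cdot\mathbf{v}-g\| &\leq \|\nabla \cdot\overline{\mathbf{v}} - \overline{g}\|+\|\mathbf{n}^\top \nabla \overline{\mathbf{v}}\,\mathbf{n}\|,\\ \|\Delta_\Gamma u - g\| &\leq C\big(\|\Delta \overline{u} -\overline{g}\|+\|\langle\mathbf{n},\nabla \overline{u}\rangle\|+\|\mathbf{n}^\top\nabla^2 \overline{u}\, \mathbf{n}\|\big), \end{align*} where $C=\max(1,2\sup_\Gamma|H|)$, $\|\cdot\|$ is the $L^2(\Gamma)$ norm of scalar or vector functions, $\nabla^2$ is the Hessian, and $\nabla\overline{\mathbf{v}}$ is the Jacobian matrix of $\overline{\mathbf{v}}$.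
   Context: $\nabla$, $\nabla\cdot$, $\Delta$ denote the ordinary gradient, divergence and Laplacian in $\mathbb{R}^3$, and $\langle\cdot,\cdot\rangle$ the Euclidean inner product. For a function $w$ on $\Gamma$, $\overline{w}$ denotes its smooth extension to a neighborhood $U$ of $\Gamma$ with $\overline{w}|_\Gamma=w$ and $\overline{w}$ constant along the normal direction $\mathbf{n}$ at each point of $\Gamma$ (for vector fields, componentwise). Surface gradient: for $u\in C^1(\Gamma)$, $\nabla_\Gamma u=\nabla\overline{u}-\langle\nabla\overline{u},\mathbf{n}\rangle\mathbf{n}=(D_1u,D_2u,D_3u)$. Surface divergence of $\mathbf{v}=(v_1,v_2,v_3)\in (C^1)^3$: $\nabla_\Gamma\cdot\mathbf{v}=D_1v_1+D_2v_2+D_3v_3$. Laplace–Beltrami operator: $\Delta_\Gamma u=\nabla_\Gamma\cdot\nabla_\Gamma u$ for $u\in C^2$. The mean curvature $H$ is taken with the convention $\nabla\cdot\mathbf{n}=-2H$. *)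

theory Defs
  imports "HOL-Analysis.Analysis"
begin

type_synonym R3 = "real ^ 3"

definition pd :: "3 \<Rightarrow> (R3 \<Rightarrow> real) \<Rightarrow> R3 \<Rightarrow> real" where
  "pd i f x = frechet_derivative f (at x) (axis i 1)"

definition grad :: "(R3 \<Rightarrow> real) \<Rightarrow> R3 \<Rightarrow> R3" where
  "grad f x = (\<chi> i. pd i f x)"

definition divg :: "(R3 \<Rightarrow> R3) \<Rightarrow> R3 \<Rightarrow> real" where
  "divg v x = (\<Sum>i\<in>UNIV. pd i (\<lambda>y. v y $ i) x)"

definition lap :: "(R3 \<Rightarrow> real) \<Rightarrow> R3 \<Rightarrow> real" where
  "lap f x = (\<Sum>i\<in>UNIV. pd i (pd i f) x)"

definition jac_form :: "(R3 \<Rightarrow> R3) \<Rightarrow> R3 \<Rightarrow> R3 \<Rightarrow> real" where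
  "jac_form v m x = (\<Sum>i\<in>UNIV. \<Sum>j\<in>UNIV. m $ i * pd j (\<lambda>y. v y $ i) x * m $ j)"

definition hess_form :: "(R3 \<Rightarrow> real) \<Rightarrow> R3 \<Rightarrow> R3 \<Rightarrow> real" where
  "hess_form f m x = (\<Sum>i\<in>UNIV. \<Sum>j\<in>UNIV. m $ i * pd j (pd i f) x * m $ j)"

fun Ck :: "nat \<Rightarrow> (R3 \<Rightarrow> real) \<Rightarrow> R3 set \<Rightarrow> bool" where
  "Ck 0 f U = continuous_on U f"
| "Ck (Suc k) f U = ((\<forall>x\<in>U. f differentiable (at x)) \<and> (\<forall>i. Ck k (pd i f) U))"

definition smooth_on :: "R3 set \<Rightarrow> (R3 \<Rightarrow> real) \<Rightarrow> bool" where
  "smooth_on U f \<longleftrightarrow> (\<forall>k. Ck k f U)"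

definition smooth_surface :: "R3 set \<Rightarrow> (R3 \<Rightarrow> R3) \<Rightarrow> bool" where
  "smooth_surface \<Gamma> n \<longleftrightarrow>
     (\<forall>p\<in>\<Gamma>. \<exists>V \<phi>. open V \<and> p \<in> V \<and> smooth_on V \<phi> \<and>
        (\<forall>x\<in>V. grad \<phi> x \<noteq> 0) \<and> \<Gamma> \<inter> V = {x\<in>V. \<phi> x = 0} \<and>
        (\<forall>x\<in>\<Gamma> \<inter> V. n x = (1 / norm (grad \<phi> x)) *\<^sub>R grad \<phi> x))"

definition is_normal_ext :: "R3 set \<Rightarrow> (R3 \<Rightarrow> R3) \<Rightarrow> (R3 \<Rightarrow> real) \<Rightarrow> (R3 \<Rightarrow> real) \<Rightarrow> bool" where
  "is_normal_ext \<Gamma> n w W \<longleftrightarrow>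
     (\<exists>U. open U \<and> \<Gamma> \<subseteq> U \<and> (\<forall>y\<in>U. W differentiable (at y)) \<and>
        (\<forall>x\<in>\<Gamma>. W x = w x) \<and>
        (\<forall>x\<in>\<Gamma>. \<exists>e>0. \<forall>t. \<bar>t\<bar> < e \<longrightarrow> W (x + t *\<^sub>R n x) = w x))"

definition nrm_ext :: "R3 set \<Rightarrow> (R3 \<Rightarrow> R3) \<Rightarrow> (R3 \<Rightarrow> real) \<Rightarrow> (R3 \<Rightarrow> real)" where
  "nrm_ext \<Gamma> n w = (SOME W. is_normal_ext \<Gamma> n w W)"

definition surf_grad :: "R3 set \<Rightarrow> (R3 \<Rightarrow> R3) \<Rightarrow> (R3 \<Rightarrow> real) \<Rightarrow> R3 \<Rightarrow> R3" where
  "surf_grad \<Gamma> n w x = grad (nrm_ext \<Gamma> n w) x - (grad (nrm_ext \<Gamma> n w) x \<bullet> n x) *\<^sub>R n x"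

definition surf_div :: "R3 set \<Rightarrow> (R3 \<Rightarrow> R3) \<Rightarrow> (R3 \<Rightarrow> R3) \<Rightarrow> R3 \<Rightarrow> real" where
  "surf_div \<Gamma> n v x = (\<Sum>i\<in>UNIV. surf_grad \<Gamma> n (\<lambda>y. v y $ i) x $ i)"

definition lap_beltrami :: "R3 set \<Rightarrow> (R3 \<Rightarrow> R3) \<Rightarrow> (R3 \<Rightarrow> real) \<Rightarrow> R3 \<Rightarrow> real" where
  "lap_beltrami \<Gamma> n w x = surf_div \<Gamma> n (surf_grad \<Gamma> n w) x"

(* mean curvature, convention \<nabla>\<cdot>\<overline>n = -2H *)
definition mean_curv :: "R3 set \<Rightarrow> (R3 \<Rightarrow> R3) \<Rightarrow> R3 \<Rightarrow> real" where
  "mean_curv \<Gamma> n x = - (1/2) * (\<Sum>i\<in>UNIV. pd i (nrm_ext \<Gamma> n (\<lambda>y. n y $ i)) x)"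

definition H2_delta :: "real \<Rightarrow> R3 set \<Rightarrow> ennreal" where
  "H2_delta \<delta> A = (INF C \<in> {C :: nat \<Rightarrow> R3 set. A \<subseteq> (\<Union>i. C i) \<and>
        (\<forall>i. bounded (C i) \<and> diameter (C i) < \<delta>)}.
        (\<Sum>i. ennreal (pi / 4 * (diameter (C i))\<^sup>2)))"

definition H2_outer :: "R3 set \<Rightarrow> ennreal" where
  "H2_outer A = (SUP \<delta> \<in> {0<..}. H2_delta \<delta> A)"

definition surface_measure :: "R3 set \<Rightarrow> R3 measure" where
  "surface_measure \<Gamma> = measure_of \<Gamma> (sets (restrict_space borel \<Gamma>)) H2_outer"

definition L2norm :: "R3 set \<Rightarrow> (R3 \<Rightarrow> 'a::real_normed_vector) \<Rightarrow> ennreal" where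
  "L2norm \<Gamma> F = (let I = (\<integral>\<^sup>+ x. ennreal ((norm (F x))\<^sup>2) \<partial>surface_measure \<Gamma>)
                  in if I = \<infinity> then \<infinity> else ennreal (sqrt (enn2real I)))"

end

theory Submission
  imports Defs
begin

text \<open>Every surface operator can be computed from an arbitrary differentiable extension \<open>Z\<close> of
  the data: \<open>\<nabla>\<^sub>\<Gamma> w = \<nabla>Z - \<langle>\<nabla>Z, n\<rangle> n\<close>. Indeed the normal extension \<open>W\<close> has no normal
  derivative, and \<open>W - Z\<close> vanishes on \<open>\<Gamma>\<close>, so by Lagrange's condition its gradient is normal.
  The normal extension exists because the nearest-point projection onto \<open>\<Gamma>\<close> is differentiable
  near \<open>\<Gamma>\<close>: locally it is read off the inverse of \<open>(z, t) \<mapsto> (z + t \<nabla>\<phi>(z), \<phi>(z))\<close>, for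
  \<open>\<phi>\<close> a defining function of \<open>\<Gamma>\<close>.

  Componentwise this gives \<open>\<nabla>\<^sub>\<Gamma>\<cdot>v = \<nabla>\<cdot>v - n\<^sup>T (\<nabla>v) n\<close> and \<open>-2H = \<nabla>\<^sub>\<Gamma>\<cdot>n\<close>; applied to the
  extension \<open>\<nabla>u - \<langle>\<nabla>u, N\<rangle> N\<close> of \<open>\<nabla>\<^sub>\<Gamma> u\<close>, with \<open>N = \<nabla>\<phi> / |\<nabla>\<phi>|\<close>, the product rule
  gives \<open>\<Delta>\<^sub>\<Gamma> u = \<Delta>u - n\<^sup>T (\<nabla>\<^sup>2u) n + 2H \<langle>n, \<nabla>u\<rangle>\<close>. The three estimates follow from the
  triangle inequality in \<open>L\<^sup>2(\<Gamma>)\<close>.\<close>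

section \<open>Partial derivatives and \<open>C\<^sup>k\<close> functions\<close>

lemma pd_eq_derivative: "(f has_derivative D) (at x) \<Longrightarrow> pd i f x = D (axis i 1)"
  unfolding pd_def using frechet_derivative_at by metis

lemma grad_nth [simp]: "grad f x $ i = pd i f x"
  by (simp add: grad_def)

lemma linear_eq_inner_axis:
  fixes D :: "real ^ 'n \<Rightarrow> real"
  assumes "linear D"
  shows "D h = (\<chi> i. D (axis i 1)) \<bullet> h"
proof -
  have "h = (\<Sum>i\<in>UNIV. h $ i *\<^sub>R axis i 1)"
    by (simp add: vec_eq_iff axis_def sum.delta' if_distrib cong: if_cong)
  then have "D h = D (\<Sum>i\<in>UNIV. h $ i *\<^sub>R axis i 1)" by simp
  also have "\<dots> = (\<Sum>i\<in>UNIV. h $ i * D (axis i 1))"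
    using assms by (simp add: linear_sum linear_scale)
  finally show ?thesis
    by (simp add: inner_vec_def mult.commute)
qed

lemma has_derivative_grad:
  assumes "f differentiable (at x)"
  shows "(f has_derivative (\<lambda>h. grad f x \<bullet> h)) (at x)"
proof -
  from assms have d: "(f has_derivative frechet_derivative f (at x)) (at x)"
    using frechet_derivative_works by blast
  have "frechet_derivative f (at x) h = grad f x \<bullet> h" for h
    unfolding grad_def pd_def by (rule linear_eq_inner_axis[OF has_derivative_linear[OF d]])
  then have "frechet_derivative f (at x) = (\<lambda>h. grad f x \<bullet> h)" ..
  with d show ?thesis by simp
qed

lemma pd_diff:
  assumes "f differentiable (at x)" "g differentiable (at x)"
  shows "pd j (\<lambda>y. f y - g y) x = pd j f x - pd j g x"
  using pd_eq_derivative[OF has_derivative_diff[OF has_derivative_grad[OF assms(1)] has_derivative_grad[OF assms(2)]]]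
  by (simp add: inner_axis)

lemma grad_diff:
  assumes "f differentiable (at x)" "g differentiable (at x)"
  shows "grad (\<lambda>y. f y - g y) x = grad f x - grad g x"
  using pd_diff[OF assms] by (simp add: vec_eq_iff)

lemma pd_mult:
  assumes "f differentiable (at x)" "g differentiable (at x)"
  shows "pd j (\<lambda>y. f y * g y) x = pd j f x * g x + f x * pd j g x"
  using pd_eq_derivative[OF has_derivative_mult[OF has_derivative_grad[OF assms(1)] has_derivative_grad[OF assms(2)]]]
  by (simp add: inner_axis)

lemma differentiable_vec_nth:
  fixes N :: "'a::real_normed_vector \<Rightarrow> real ^ 'n"
  assumes "N differentiable (at y)"
  shows "(\<lambda>y. N y $ i) differentiable (at y)"
  using differentiable_inner[OF assms differentiable_const[of "axis i 1"]] by (simp add: inner_axis)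

lemma differentiable_transform_within_open:
  assumes "f differentiable (at x)" "open S" "x \<in> S" "\<And>y. y \<in> S \<Longrightarrow> f y = g y"
  shows "g differentiable (at x)"
proof -
  obtain D where "(f has_derivative D) (at x)" using assms(1) by (auto simp: differentiable_def)
  then have "(g has_derivative D) (at x)"
    by (rule has_derivative_transform_within_open[OF _ assms(2-4)])
  then show ?thesis by (auto simp: differentiable_def)
qed

definition hess_apply :: "(R3 \<Rightarrow> real) \<Rightarrow> R3 \<Rightarrow> R3 \<Rightarrow> R3" where
  "hess_apply f x h = (\<chi> i. grad (pd i f) x \<bullet> h)"

lemma has_derivative_grad_field:
  assumes "\<And>i. pd i f differentiable (at x)"
  shows "(grad f has_derivative hess_apply f x) (at x)"
proof -
  have "\<forall>b\<in>Basis. ((\<lambda>y. grad f y \<bullet> b) has_derivative (\<lambda>h. hess_apply f x h \<bullet> b)) (at x)"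
    using has_derivative_grad[OF assms] by (auto simp: Basis_vec_def inner_axis hess_apply_def)
  then show ?thesis
    using has_derivative_componentwise_within[of "grad f" "hess_apply f x" x UNIV] by simp
qed

lemma continuous_on_grad:
  assumes "\<And>i. continuous_on U (pd i f)"
  shows "continuous_on U (grad f)"
  unfolding grad_def using assms by (intro continuous_on_vec_lambda) auto

lemma Ck_subset: "Ck k f U \<Longrightarrow> V \<subseteq> U \<Longrightarrow> Ck k f V"
  by (induction k arbitrary: f) (auto intro: continuous_on_subset)

lemma Ck1_differentiable: "Ck 1 f U \<Longrightarrow> x \<in> U \<Longrightarrow> f differentiable (at x)"
  and Ck1_continuous_pd: "Ck 1 f U \<Longrightarrow> continuous_on U (pd i f)"
  by auto

lemma Ck2_differentiable: "Ck 2 f U \<Longrightarrow> x \<in> U \<Longrightarrow> f differentiable (at x)"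
  and Ck2_pd_differentiable: "Ck 2 f U \<Longrightarrow> x \<in> U \<Longrightarrow> pd i f differentiable (at x)"
  and Ck2_continuous_pd2: "Ck 2 f U \<Longrightarrow> continuous_on U (pd j (pd i f))"
  by (auto simp: numeral_2_eq_2)

lemma Ck2_continuous_on: "Ck 2 f U \<Longrightarrow> continuous_on U f"
  by (meson Ck2_differentiable continuous_at_imp_continuous_on differentiable_imp_continuous_within)

lemma Ck2_continuous_pd: "Ck 2 f U \<Longrightarrow> continuous_on U (pd i f)"
  by (meson Ck2_pd_differentiable continuous_at_imp_continuous_on differentiable_imp_continuous_within)

lemma Ck2_imp_Ck1: "Ck 2 f U \<Longrightarrow> Ck 1 f U"
  by (simp add: Ck2_differentiable Ck2_continuous_pd)

lemma Ck2_continuous_grad: "Ck 2 f U \<Longrightarrow> continuous_on U (grad f)"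
  by (intro continuous_on_grad Ck2_continuous_pd)

lemma Ck2_differentiable_grad: "Ck 2 f U \<Longrightarrow> x \<in> U \<Longrightarrow> grad f differentiable (at x)"
  using has_derivative_grad_field Ck2_pd_differentiable unfolding differentiable_def by blast

lemma divg_grad: "divg (grad f) x = lap f x"
  and jac_form_grad: "jac_form (grad f) m x = hess_form f m x"
  by (simp_all add: divg_def lap_def jac_form_def hess_form_def)

lemma
  assumes "\<And>i. (\<lambda>y. V y $ i) differentiable (at x)" "\<And>i. (\<lambda>y. W y $ i) differentiable (at x)"
  shows divg_diff: "divg (\<lambda>y. V y - W y) x = divg V x - divg W x"
    and jac_form_diff: "jac_form (\<lambda>y. V y - W y) m x = jac_form V m x - jac_form W m x"
  by (simp_all add: divg_def jac_form_def pd_diff[OF assms] sum_subtractf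
      right_diff_distrib left_diff_distrib)

lemma
  assumes "f differentiable (at x)" "\<And>i. (\<lambda>y. N y $ i) differentiable (at x)"
  shows divg_scaleR: "divg (\<lambda>y. f y *\<^sub>R N y) x = grad f x \<bullet> N x + f x * divg N x"
    and jac_form_scaleR: "jac_form (\<lambda>y. f y *\<^sub>R N y) m x = (grad f x \<bullet> m) * (N x \<bullet> m) + f x * jac_form N m x"
  by (simp_all add: divg_def jac_form_def inner_vec_def pd_mult[OF assms] sum.distrib
      sum_distrib_left sum_distrib_right distrib_left distrib_right mult_ac)

section \<open>The \<open>L\<^sup>2\<close> norm on the surface\<close>

lemma sq_le_weighted_sq_sum:
  fixes k t b l :: real
  assumes "0 \<le> k" "k \<le> t + b" "0 \<le> t" "0 \<le> b" "0 < l"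
  shows "k\<^sup>2 \<le> (1 + l) * t\<^sup>2 + (1 + 1/l) * b\<^sup>2"
proof -
  have "k\<^sup>2 \<le> (t + b)\<^sup>2"
    using assms by (intro power_mono) auto
  moreover have "2 * t * b \<le> l * t\<^sup>2 + b\<^sup>2 / l"
  proof -
    have "0 \<le> (l * t - b)\<^sup>2" by simp
    then have "(2 * t * b) * l \<le> (l * t\<^sup>2 + b\<^sup>2 / l) * l"
      using assms by (simp add: power2_eq_square algebra_simps)
    then show ?thesis using assms by simp
  qed
  ultimately show ?thesis by (simp add: power2_eq_square algebra_simps)
qed

text \<open>Only \<open>b\<close> has to be measurable: the integral of \<open>h\<^sup>2\<close> is approximated by simple
  functions \<open>k\<^sup>2 \<le> h\<^sup>2\<close>, and \<open>max 0 (k - b)\<close> is a measurable minorant of \<open>\<bar>a\<bar>\<close>.\<close>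
lemma nn_integral_sq_le_weighted_sum:
  fixes h a b :: "'x \<Rightarrow> real"
  assumes le: "\<forall>x\<in>space M. \<bar>h x\<bar> \<le> \<bar>a x\<bar> + b x"
    and b: "b \<in> borel_measurable M" "\<forall>x\<in>space M. 0 \<le> b x" and l: "0 < l"
  shows "(\<integral>\<^sup>+x. ennreal ((h x)\<^sup>2) \<partial>M)
     \<le> ennreal (1 + l) * (\<integral>\<^sup>+x. ennreal ((a x)\<^sup>2) \<partial>M) + ennreal (1 + 1/l) * (\<integral>\<^sup>+x. ennreal ((b x)\<^sup>2) \<partial>M)"
  unfolding nn_integral_def[of M "\<lambda>x. ennreal ((h x)\<^sup>2)"]
proof (rule SUP_least, clarify)
  fix g assume g: "simple_function M g" "g \<le> (\<lambda>x. ennreal ((h x)\<^sup>2))"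
  define k where "k x = sqrt (enn2real (g x))" for x
  define t where "t x = max 0 (k x - b x)" for x
  have t_meas: "t \<in> borel_measurable M"
    unfolding t_def k_def using borel_measurable_simple_function[OF g(1)] b(1) by measurable
  have g_eq: "g x = ennreal ((k x)\<^sup>2)" and k_le: "k x \<le> \<bar>h x\<bar>" for x
  proof -
    have g_le: "g x \<le> ennreal ((h x)\<^sup>2)" using g(2) by (simp add: le_fun_def)
    then have "g x < top" using le_less_trans by fastforce
    then show "g x = ennreal ((k x)\<^sup>2)" unfolding k_def by (simp add: ennreal_enn2real_if)
    have "enn2real (g x) \<le> (h x)\<^sup>2"
      using enn2real_mono[OF g_le] by simp
    then show "k x \<le> \<bar>h x\<bar>" unfolding k_def by (metis real_sqrt_abs real_sqrt_le_mono)
  qed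
  have k_sq: "(k x)\<^sup>2 \<le> (1 + l) * (t x)\<^sup>2 + (1 + 1/l) * (b x)\<^sup>2" if "x \<in> space M" for x
    using sq_le_weighted_sq_sum[of "k x" "t x" "b x" l] b(2) that l unfolding t_def k_def by auto
  have t_sq: "(t x)\<^sup>2 \<le> (a x)\<^sup>2" if "x \<in> space M" for x
  proof -
    have "t x \<le> \<bar>a x\<bar>" "0 \<le> t x" using k_le[of x] le that unfolding t_def by force+
    then show ?thesis by (metis abs_le_square_iff abs_of_nonneg)
  qed
  have "integral\<^sup>S M g = (\<integral>\<^sup>+x. g x \<partial>M)"
    using nn_integral_eq_simple_integral[OF g(1)] by simp
  also have "\<dots> = (\<integral>\<^sup>+x. ennreal ((k x)\<^sup>2) \<partial>M)"
    by (simp add: g_eq)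
  also have "\<dots> \<le> (\<integral>\<^sup>+x. ennreal (1 + l) * ennreal ((t x)\<^sup>2) + ennreal (1 + 1/l) * ennreal ((b x)\<^sup>2) \<partial>M)"
    using k_sq l by (intro nn_integral_mono)
      (simp add: ennreal_mult[symmetric] ennreal_plus[symmetric] del: ennreal_plus)
  also have "\<dots> = ennreal (1 + l) * (\<integral>\<^sup>+x. ennreal ((t x)\<^sup>2) \<partial>M) + ennreal (1 + 1/l) * (\<integral>\<^sup>+x. ennreal ((b x)\<^sup>2) \<partial>M)"
    using t_meas b(1) by (simp add: nn_integral_add nn_integral_cmult)
  also have "\<dots> \<le> ennreal (1 + l) * (\<integral>\<^sup>+x. ennreal ((a x)\<^sup>2) \<partial>M) + ennreal (1 + 1/l) * (\<integral>\<^sup>+x. ennreal ((b x)\<^sup>2) \<partial>M)"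
    by (intro add_mono mult_left_mono nn_integral_mono) (auto simp: t_sq)
  finally show "integral\<^sup>S M g \<le> \<dots>" .
qed

lemma sqrt_le_sqrt_add_sqrt_of_weighted:
  fixes a b c :: real
  assumes "0 \<le> b" "0 \<le> c" and weighted: "\<And>l. 0 < l \<Longrightarrow> a \<le> (1 + l) * b + (1 + 1/l) * c"
  shows "sqrt a \<le> sqrt b + sqrt c"
proof -
  define p q where "p = sqrt b" and "q = sqrt c"
  have pq: "0 \<le> p" "0 \<le> q" "b = p\<^sup>2" "c = q\<^sup>2"
    using assms by (auto simp: p_def q_def)
  have "a \<le> (p + q)\<^sup>2 + e" if e: "0 < e" for e
  proof -
    define \<epsilon> where "\<epsilon> = e / (p + q + 1)"
    \<comment> \<open>\<open>l\<close> approximates \<open>q / p\<close>, the weight for which the bound equals \<open>(p + q)\<^sup>2\<close>\<close>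
    define l where "l = (q + \<epsilon>) / (p + \<epsilon>)"
    have \<epsilon>: "0 < \<epsilon>" "\<epsilon> * (p + q) \<le> e"
      using e pq by (auto simp: \<epsilon>_def field_simps)
    have l: "0 < l" using \<epsilon> pq by (simp add: l_def)
    have "l * p\<^sup>2 = (q + \<epsilon>) * p * (p / (p + \<epsilon>))"
      by (simp add: l_def power2_eq_square)
    also have "\<dots> \<le> (q + \<epsilon>) * p"
      using \<epsilon> pq by (intro mult_right_le_one_le) auto
    finally have lp: "l * p\<^sup>2 \<le> (q + \<epsilon>) * p" .
    have "q\<^sup>2 / l = q * (p + \<epsilon>) * (q / (q + \<epsilon>))"
      by (simp add: l_def power2_eq_square)
    also have "\<dots> \<le> q * (p + \<epsilon>)"
      using \<epsilon> pq by (intro mult_right_le_one_le) auto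
    finally have lq: "q\<^sup>2 / l \<le> q * (p + \<epsilon>)" .
    have "(1 + l) * b + (1 + 1/l) * c = p\<^sup>2 + q\<^sup>2 + l * p\<^sup>2 + q\<^sup>2 / l"
      using pq by (simp add: algebra_simps)
    also have "\<dots> \<le> (p + q)\<^sup>2 + \<epsilon> * (p + q)"
      using lp lq by (simp add: power2_eq_square algebra_simps)
    finally have "(1 + l) * b + (1 + 1/l) * c \<le> (p + q)\<^sup>2 + \<epsilon> * (p + q)" .
    then show ?thesis using weighted[OF l] \<epsilon> by linarith
  qed
  then have "a \<le> (p + q)\<^sup>2" by (rule field_le_epsilon)
  then have "sqrt a \<le> sqrt ((p + q)\<^sup>2)" by (rule real_sqrt_le_mono)
  then show ?thesis using pq(1,2) by (simp add: p_def q_def)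
qed

definition sqrt_ennreal :: "ennreal \<Rightarrow> ennreal" where
  "sqrt_ennreal I = (if I = \<infinity> then \<infinity> else ennreal (sqrt (enn2real I)))"

lemma sqrt_ennreal_le_add_of_weighted:
  assumes "\<And>l. 0 < l \<Longrightarrow> I \<le> ennreal (1 + l) * J + ennreal (1 + 1/l) * K"
  shows "sqrt_ennreal I \<le> sqrt_ennreal J + sqrt_ennreal K"
proof (cases "J = \<infinity> \<or> K = \<infinity>")
  case True
  then show ?thesis unfolding sqrt_ennreal_def by auto
next
  case False
  then obtain b c where J: "J = ennreal b" "0 \<le> b" and K: "K = ennreal c" "0 \<le> c"
    by (metis ennreal_cases infinity_ennreal_def)
  have "I \<le> ennreal 2 * J + ennreal 2 * K" using assms[of 1] by simp
  also have "\<dots> < \<infinity>" using J K by (simp add: ennreal_mult_less_top)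
  finally obtain a where I: "I = ennreal a" "0 \<le> a"
    by (metis ennreal_cases infinity_ennreal_def less_irrefl)
  have "a \<le> (1 + l) * b + (1 + 1/l) * c" if "0 < l" for l
    using assms[OF that] I J K that
    by (simp add: ennreal_mult[symmetric] ennreal_plus[symmetric] del: ennreal_plus)
  then have "sqrt a \<le> sqrt b + sqrt c"
    using sqrt_le_sqrt_add_sqrt_of_weighted J K by blast
  then show ?thesis
    unfolding sqrt_ennreal_def using I J K by (simp add: ennreal_plus[symmetric] del: ennreal_plus)
qed

lemma sqrt_ennreal_mult_square:
  assumes "0 \<le> c"
  shows "sqrt_ennreal (ennreal (c\<^sup>2) * I) = ennreal c * sqrt_ennreal I"
proof (cases "I = \<infinity>")
  case True
  then show ?thesis
    using assms unfolding sqrt_ennreal_def by (cases "c = 0") (auto simp: ennreal_mult_top)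
next
  case False
  then obtain y where "I = ennreal y" "0 \<le> y"
    by (metis ennreal_cases infinity_ennreal_def)
  then show ?thesis
    unfolding sqrt_ennreal_def using assms by (simp add: ennreal_mult[symmetric] real_sqrt_mult)
qed

lemma L2norm_eq_sqrt_ennreal:
  "L2norm \<Gamma> F = sqrt_ennreal (\<integral>\<^sup>+x. ennreal ((norm (F x))\<^sup>2) \<partial>surface_measure \<Gamma>)"
  unfolding L2norm_def sqrt_ennreal_def Let_def by simp

lemma space_surface_measure: "space (surface_measure \<Gamma>) = \<Gamma>"
  and sets_surface_measure: "sets (surface_measure \<Gamma>) = sets (restrict_space borel \<Gamma>)"
proof -
  have sub: "sets (restrict_space borel \<Gamma>) \<subseteq> Pow \<Gamma>"
    using sets.space_closed[of "restrict_space borel \<Gamma>"] by (simp add: space_restrict_space)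
  then show "space (surface_measure \<Gamma>) = \<Gamma>"
    unfolding surface_measure_def by (simp add: space_measure_of_conv)
  have "sets (surface_measure \<Gamma>) = sigma_sets \<Gamma> (sets (restrict_space borel \<Gamma>))"
    unfolding surface_measure_def using sub by (simp add: sets_measure_of)
  also have "\<dots> = sets (restrict_space borel \<Gamma>)"
    using sets.sigma_sets_eq[of "restrict_space borel \<Gamma>"] by (simp add: space_restrict_space)
  finally show "sets (surface_measure \<Gamma>) = sets (restrict_space borel \<Gamma>)" .
qed

lemma continuous_on_imp_measurable_surface:
  assumes "continuous_on \<Gamma> f"
  shows "f \<in> borel_measurable (surface_measure \<Gamma>)"
  using borel_measurable_continuous_on_restrict[OF assms]
    measurable_cong_sets[OF sets_surface_measure refl] by blast

lemma L2norm_triangle: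
  fixes F A :: "R3 \<Rightarrow> 'a::real_normed_vector" and B :: "R3 \<Rightarrow> 'b::real_normed_vector"
  assumes "\<forall>x\<in>\<Gamma>. norm (F x) \<le> norm (A x) + norm (B x)"
    and "(\<lambda>x. norm (B x)) \<in> borel_measurable (surface_measure \<Gamma>)"
  shows "L2norm \<Gamma> F \<le> L2norm \<Gamma> A + L2norm \<Gamma> B"
  unfolding L2norm_eq_sqrt_ennreal
  by (rule sqrt_ennreal_le_add_of_weighted,
      rule nn_integral_sq_le_weighted_sum[where h="\<lambda>x. norm (F x)" and a="\<lambda>x. norm (A x)", simplified])
    (use assms in \<open>auto simp: space_surface_measure\<close>)

lemma L2norm_mult:
  fixes B :: "R3 \<Rightarrow> real"
  assumes "0 \<le> c" and "B \<in> borel_measurable (surface_measure \<Gamma>)"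
  shows "L2norm \<Gamma> (\<lambda>x. c * B x) = ennreal c * L2norm \<Gamma> B"
proof -
  have "(\<integral>\<^sup>+x. ennreal ((norm (c * B x))\<^sup>2) \<partial>surface_measure \<Gamma>)
      = (\<integral>\<^sup>+x. ennreal (c\<^sup>2) * ennreal ((norm (B x))\<^sup>2) \<partial>surface_measure \<Gamma>)"
    using assms(1) by (intro nn_integral_cong) (simp add: ennreal_mult[symmetric] power_mult_distrib abs_mult)
  also have "\<dots> = ennreal (c\<^sup>2) * (\<integral>\<^sup>+x. ennreal ((norm (B x))\<^sup>2) \<partial>surface_measure \<Gamma>)"
    using assms(2) by (intro nn_integral_cmult) measurable
  finally show ?thesis
    unfolding L2norm_eq_sqrt_ennreal using sqrt_ennreal_mult_square[OF assms(1)] by simp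
qed

section \<open>Level-set charts\<close>

text \<open>The data \<^const>\<open>smooth_surface\<close> provides near a point; two derivatives of \<open>\<phi>\<close> suffice.\<close>
definition level_chart :: "R3 set \<Rightarrow> (R3 \<Rightarrow> R3) \<Rightarrow> R3 set \<Rightarrow> (R3 \<Rightarrow> real) \<Rightarrow> bool" where
  "level_chart \<Gamma> n V \<phi> \<longleftrightarrow> open V \<and> Ck 2 \<phi> V \<and> (\<forall>x\<in>V. grad \<phi> x \<noteq> 0) \<and>
     \<Gamma> \<inter> V = {x\<in>V. \<phi> x = 0} \<and> (\<forall>x\<in>\<Gamma> \<inter> V. n x = sgn (grad \<phi> x))"

lemma smooth_surface_chart:
  assumes "smooth_surface \<Gamma> n" "p \<in> \<Gamma>" "open S" "p \<in> S"
  obtains V \<phi> where "p \<in> V" "V \<subseteq> S" "level_chart \<Gamma> n V \<phi>"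
proof -
  have "\<exists>V \<phi>. open V \<and> p \<in> V \<and> smooth_on V \<phi> \<and> (\<forall>x\<in>V. grad \<phi> x \<noteq> 0) \<and>
      \<Gamma> \<inter> V = {x\<in>V. \<phi> x = 0} \<and> (\<forall>x\<in>\<Gamma> \<inter> V. n x = (1 / norm (grad \<phi> x)) *\<^sub>R grad \<phi> x)"
    using assms(1,2) unfolding smooth_surface_def by (rule bspec)
  then obtain V \<phi> where V: "open V" "p \<in> V" "smooth_on V \<phi>" "\<forall>x\<in>V. grad \<phi> x \<noteq> 0"
    "\<Gamma> \<inter> V = {x\<in>V. \<phi> x = 0}" "\<forall>x\<in>\<Gamma> \<inter> V. n x = (1 / norm (grad \<phi> x)) *\<^sub>R grad \<phi> x"
    by (elim exE conjE) blast
  have "Ck 2 \<phi> (V \<inter> S)"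
    using V(3) Ck_subset unfolding smooth_on_def by blast
  moreover have "\<forall>x\<in>\<Gamma> \<inter> (V \<inter> S). n x = sgn (grad \<phi> x)"
    using V(6) by (simp add: sgn_div_norm divide_inverse)
  moreover have "\<Gamma> \<inter> (V \<inter> S) = {x\<in>V \<inter> S. \<phi> x = 0}"
    using V(5) by blast
  ultimately have "level_chart \<Gamma> n (V \<inter> S) \<phi>"
    unfolding level_chart_def using V(1,4) assms(3) by blast
  then show thesis
    using that V(2) assms(4) by blast
qed

lemma level_chartD:
  assumes "level_chart \<Gamma> n V \<phi>"
  shows "open V" "Ck 2 \<phi> V" "\<And>x. x \<in> V \<Longrightarrow> grad \<phi> x \<noteq> 0"
    "\<And>x. x \<in> V \<Longrightarrow> x \<in> \<Gamma> \<longleftrightarrow> \<phi> x = 0"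
    "\<And>x. x \<in> \<Gamma> \<Longrightarrow> x \<in> V \<Longrightarrow> n x = sgn (grad \<phi> x)"
  using assms unfolding level_chart_def by blast+

lemma smooth_surface_normal_norm:
  assumes "smooth_surface \<Gamma> n" "x \<in> \<Gamma>"
  shows "norm (n x) = 1"
proof -
  obtain V \<phi> where "x \<in> V" "V \<subseteq> UNIV" "level_chart \<Gamma> n V \<phi>"
    by (rule smooth_surface_chart[OF assms open_UNIV UNIV_I])
  then show ?thesis
    using level_chartD[of \<Gamma> n V \<phi>] assms(2) by (simp add: norm_sgn)
qed

lemma smooth_surface_continuous_normal:
  assumes "smooth_surface \<Gamma> n"
  shows "continuous_on \<Gamma> n"
  unfolding continuous_on_eq_continuous_within
proof
  fix x assume x: "x \<in> \<Gamma>"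
  obtain V \<phi> where V: "x \<in> V" "V \<subseteq> UNIV" and chart: "level_chart \<Gamma> n V \<phi>"
    by (rule smooth_surface_chart[OF assms x open_UNIV UNIV_I])
  have "continuous_on V (\<lambda>y. sgn (grad \<phi> y))"
    using level_chartD(3)[OF chart] Ck2_continuous_grad[OF level_chartD(2)[OF chart]]
    by (intro continuous_intros) auto
  then have cont: "continuous (at x within \<Gamma>) (\<lambda>y. sgn (grad \<phi> y))"
    using V(1) level_chartD(1)[OF chart] continuous_on_eq_continuous_at
      continuous_at_imp_continuous_within by blast
  obtain d where d: "d > 0" "ball x d \<subseteq> V"
    using V(1) level_chartD(1)[OF chart] open_contains_ball by blast
  from cont d(1) x show "continuous (at x within \<Gamma>) n"
  proof (rule continuous_transform_within)
    fix y assume "y \<in> \<Gamma>" "dist y x < d"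
    then show "sgn (grad \<phi> y) = n y"
      using level_chartD(5)[OF chart] d(2) by (auto simp: dist_commute subset_iff)
  qed
qed

lemma level_chart_differentiable_normal:
  assumes chart: "level_chart \<Gamma> n V \<phi>" and y: "y \<in> V"
  shows "(\<lambda>y. sgn (grad \<phi> y)) differentiable (at y)"
proof -
  note chartD = level_chartD[OF chart]
  have dG: "grad \<phi> differentiable (at y)"
    by (rule Ck2_differentiable_grad[OF chartD(2) y])
  then have "(\<lambda>y. norm (grad \<phi> y)) differentiable (at y)"
    using differentiable_chain_at[OF dG differentiable_norm_at[OF chartD(3)[OF y]]] by (simp add: o_def)
  then have "(\<lambda>y. inverse (norm (grad \<phi> y)) *\<^sub>R grad \<phi> y) differentiable (at y)"
    using dG chartD(3)[OF y] by (intro differentiable_scaleR differentiable_inverse) auto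
  then show ?thesis by (simp add: sgn_div_norm)
qed

section \<open>Minima under a level-set constraint\<close>

lemma scaleR_add_norm_le:
  fixes \<sigma> a :: "'a::real_normed_vector"
  assumes "\<bar>t\<bar> \<le> s * \<delta>" "0 \<le> s"
  shows "norm (s *\<^sub>R \<sigma> + t *\<^sub>R a) \<le> s * (norm \<sigma> + \<delta> * norm a)"
proof -
  have "norm (s *\<^sub>R \<sigma> + t *\<^sub>R a) \<le> s * norm \<sigma> + \<bar>t\<bar> * norm a"
    using assms(2) norm_triangle_ineq[of "s *\<^sub>R \<sigma>" "t *\<^sub>R a"] by simp
  also have "\<dots> \<le> s * norm \<sigma> + (s * \<delta>) * norm a"
    using assms(1) by (simp add: mult_right_mono)
  finally show ?thesis by (simp add: algebra_simps)
qed

lemma zero_of_near_linear: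
  fixes f :: "real \<Rightarrow> real"
  assumes "continuous_on {-T..T} f" "0 < T" "0 < c"
    and near: "\<And>t. \<bar>t\<bar> \<le> T \<Longrightarrow> \<bar>f t - t * c\<bar> \<le> T * c / 2"
  shows "\<exists>t. \<bar>t\<bar> \<le> T \<and> f t = 0"
proof -
  have "\<bar>f T - T * c\<bar> \<le> T * c / 2" "\<bar>f (-T) + T * c\<bar> \<le> T * c / 2"
    using near[of T] near[of "-T"] assms(2) by simp_all
  then have "f (-T) \<le> 0" "0 \<le> f T"
    using mult_pos_pos[OF assms(2,3)] unfolding abs_le_iff by linarith+
  then obtain t where "-T \<le> t" "t \<le> T" "f t = 0"
    using IVT'[of f "-T" 0 T] assms(1,2) by auto
  then show ?thesis by (intro exI[of _ t]) auto
qed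

lemma level_set_points_along_tangent:
  fixes \<phi> :: "'a::real_inner \<Rightarrow> real"
  assumes V: "open V" "z \<in> V" and cont: "continuous_on V \<phi>"
    and deriv: "(\<phi> has_derivative (\<lambda>h. a \<bullet> h)) (at z)" and "a \<noteq> 0" "\<phi> z = 0"
    and tangent: "a \<bullet> \<sigma> = 0" and "0 < \<delta>"
  shows "\<exists>s0>0. \<forall>s. 0 < s \<longrightarrow> s < s0 \<longrightarrow>
           (\<exists>t. \<bar>t\<bar> \<le> s * \<delta> \<and> z + s *\<^sub>R \<sigma> + t *\<^sub>R a \<in> V \<and> \<phi> (z + s *\<^sub>R \<sigma> + t *\<^sub>R a) = 0)"
proof -
  define M where "M = norm \<sigma> + \<delta> * norm a"
  have M: "M > 0" unfolding M_def using assms by (simp add: add_nonneg_pos)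
  have aa: "a \<bullet> a > 0" using assms by simp
  define e where "e = \<delta> * (a \<bullet> a) / (2 * M)"
  have "e > 0" unfolding e_def using assms aa M by simp
  then obtain d where d: "d > 0" "\<forall>y. norm (y - z) < d \<longrightarrow> norm (\<phi> y - \<phi> z - a \<bullet> (y - z)) \<le> e * norm (y - z)"
    using deriv unfolding has_derivative_at_alt by blast
  obtain r where r: "r > 0" "ball z r \<subseteq> V" using V open_contains_ball by blast
  show ?thesis
  proof (rule exI[of _ "min d r / M"], intro conjI allI impI)
    show "0 < min d r / M" using d r M by simp
    fix s assume s: "0 < s" "s < min d r / M"
    define w where "w t = z + s *\<^sub>R \<sigma> + t *\<^sub>R a" for t
    have w_le: "norm (w t - z) \<le> s * M" if "\<bar>t\<bar> \<le> s * \<delta>" for t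
      using scaleR_add_norm_le[OF that] s unfolding w_def M_def by simp
    moreover have "s * M < min d r"
      using s M by (simp add: less_divide_eq)
    ultimately have w_near: "norm (w t - z) < min d r" if "\<bar>t\<bar> \<le> s * \<delta>" for t
      using that by fastforce
    then have w_in: "w t \<in> V" if "\<bar>t\<bar> \<le> s * \<delta>" for t
      using that r by (auto simp: dist_norm norm_minus_commute)
    have "\<bar>\<phi> (w t) - t * (a \<bullet> a)\<bar> \<le> s * \<delta> * (a \<bullet> a) / 2" if "\<bar>t\<bar> \<le> s * \<delta>" for t
    proof -
      have "a \<bullet> (w t - z) = t * (a \<bullet> a)"
        unfolding w_def using tangent by (simp add: inner_add_right)
      then have "\<bar>\<phi> (w t) - t * (a \<bullet> a)\<bar> \<le> e * norm (w t - z)"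
        using d(2) w_near[OF that] assms(6) by force
      also have "\<dots> \<le> e * (s * M)"
        using w_le[OF that] \<open>e > 0\<close> by simp
      also have "\<dots> = s * \<delta> * (a \<bullet> a) / 2" unfolding e_def using M by simp
      finally show ?thesis .
    qed
    moreover have "continuous_on {- (s * \<delta>)..s * \<delta>} (\<lambda>t. \<phi> (w t))"
      using w_in unfolding w_def
      by (intro continuous_on_compose2[OF cont] continuous_intros) auto
    ultimately obtain t where "\<bar>t\<bar> \<le> s * \<delta>" "\<phi> (w t) = 0"
      using zero_of_near_linear[of "s * \<delta>" "\<lambda>t. \<phi> (w t)" "a \<bullet> a"] s assms(8) aa by auto
    then show "\<exists>t. \<bar>t\<bar> \<le> s * \<delta> \<and> z + s *\<^sub>R \<sigma> + t *\<^sub>R a \<in> V \<and> \<phi> (z + s *\<^sub>R \<sigma> + t *\<^sub>R a) = 0"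
      using w_in unfolding w_def by blast
  qed
qed

text \<open>At the points \<open>w = z + s \<sigma> + t a\<close> of the level set with \<open>\<bar>t\<bar> \<le> s \<delta>\<close>, minimality gives
  \<open>0 \<le> g w - g z = s g' \<sigma> + t g' a + o(s)\<close>.\<close>
lemma constrained_min_deriv_lower_bound:
  fixes \<phi> g :: "'a::real_inner \<Rightarrow> real"
  assumes V: "open V" "z \<in> V" "continuous_on V \<phi>"
    and d\<phi>: "(\<phi> has_derivative (\<lambda>h. a \<bullet> h)) (at z)" "a \<noteq> 0" "\<phi> z = 0"
    and dg: "(g has_derivative g') (at z)"
    and min: "\<forall>w\<in>V. \<phi> w = 0 \<longrightarrow> g z \<le> g w"
    and tangent: "a \<bullet> \<sigma> = 0" and \<delta>: "0 < \<delta>"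
  shows "- (\<delta> * \<bar>g' a\<bar>) \<le> g' \<sigma>"
proof (rule field_le_epsilon)
  fix \<epsilon> :: real assume \<epsilon>: "0 < \<epsilon>"
  define M where "M = norm \<sigma> + \<delta> * norm a"
  have M: "0 < M" unfolding M_def using \<delta> d\<phi>(2) by (simp add: add_nonneg_pos)
  obtain s0 where s0: "0 < s0" "\<forall>s. 0 < s \<longrightarrow> s < s0 \<longrightarrow>
      (\<exists>t. \<bar>t\<bar> \<le> s * \<delta> \<and> z + s *\<^sub>R \<sigma> + t *\<^sub>R a \<in> V \<and> \<phi> (z + s *\<^sub>R \<sigma> + t *\<^sub>R a) = 0)"
    using level_set_points_along_tangent[OF V d\<phi> tangent \<delta>] by blast
  have "0 < \<epsilon> / M" using \<epsilon> M by simp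
  then obtain d where d: "0 < d"
    "\<forall>y. norm (y - z) < d \<longrightarrow> norm (g y - g z - g' (y - z)) \<le> \<epsilon> / M * norm (y - z)"
    using dg unfolding has_derivative_at_alt by blast
  define s where "s = min s0 (d / M) / 2"
  have s: "0 < s" "s < s0" "s * M < d"
    using s0 d M by (auto simp: s_def min_def less_divide_eq field_simps)
  then obtain t where t: "\<bar>t\<bar> \<le> s * \<delta>" "z + s *\<^sub>R \<sigma> + t *\<^sub>R a \<in> V"
    "\<phi> (z + s *\<^sub>R \<sigma> + t *\<^sub>R a) = 0"
    using s0(2) by blast
  define w where "w = z + s *\<^sub>R \<sigma> + t *\<^sub>R a"
  have wz: "norm (w - z) \<le> s * M"
    using scaleR_add_norm_le[OF t(1)] s unfolding w_def M_def by simp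
  have "g z \<le> g w" using min t(2,3) unfolding w_def by blast
  moreover have "norm (w - z) < d" using wz s(3) by linarith
  then have "g w - g z - g' (w - z) \<le> \<epsilon> / M * norm (w - z)"
    using d(2) by (auto simp: abs_le_iff)
  moreover have "g' (w - z) = s * g' \<sigma> + t * g' a"
    using has_derivative_linear[OF dg] unfolding w_def by (simp add: linear_add linear_scale)
  moreover have "\<epsilon> / M * norm (w - z) \<le> s * \<epsilon>"
    using mult_left_mono[OF wz, of "\<epsilon> / M"] \<epsilon> M by (simp add: ac_simps)
  moreover have "t * g' a \<le> s * (\<delta> * \<bar>g' a\<bar>)"
    using mult_right_mono[OF t(1), of "\<bar>g' a\<bar>"] abs_ge_self[of "t * g' a"]
    by (simp add: abs_mult mult.assoc)
  ultimately have "0 \<le> s * (g' \<sigma> + \<delta> * \<bar>g' a\<bar> + \<epsilon>)"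
    by (simp add: algebra_simps)
  then show "- (\<delta> * \<bar>g' a\<bar>) \<le> g' \<sigma> + \<epsilon>"
    using s(1) by (simp add: zero_le_mult_iff)
qed

lemma constrained_min_deriv_nonneg:
  fixes \<phi> g :: "'a::real_inner \<Rightarrow> real"
  assumes "open V" "z \<in> V" "continuous_on V \<phi>"
    and "(\<phi> has_derivative (\<lambda>h. a \<bullet> h)) (at z)" "a \<noteq> 0" "\<phi> z = 0"
    and "(g has_derivative g') (at z)"
    and "\<forall>w\<in>V. \<phi> w = 0 \<longrightarrow> g z \<le> g w"
    and "a \<bullet> \<sigma> = 0"
  shows "0 \<le> g' \<sigma>"
proof (rule field_le_epsilon)
  fix \<epsilon> :: real assume \<epsilon>: "0 < \<epsilon>"
  define \<delta> where "\<delta> = \<epsilon> / (\<bar>g' a\<bar> + 1)"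
  have "0 < \<delta>" "\<delta> * \<bar>g' a\<bar> \<le> \<epsilon>"
    using \<epsilon> by (auto simp: \<delta>_def field_simps add_nonneg_pos)
  then show "0 \<le> g' \<sigma> + \<epsilon>"
    using constrained_min_deriv_lower_bound[OF assms] by fastforce
qed

lemma constrained_min_deriv_tangent:
  fixes \<phi> g :: "'a::real_inner \<Rightarrow> real"
  assumes "open V" "z \<in> V" "continuous_on V \<phi>"
    and "(\<phi> has_derivative (\<lambda>h. a \<bullet> h)) (at z)" "a \<noteq> 0" "\<phi> z = 0"
    and dg: "(g has_derivative g') (at z)"
    and "\<forall>w\<in>V. \<phi> w = 0 \<longrightarrow> g z \<le> g w"
    and tangent: "a \<bullet> \<tau> = 0"
  shows "g' \<tau> = 0"
proof -
  have "0 \<le> g' \<tau>" "0 \<le> g' (- \<tau>)"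
    using constrained_min_deriv_nonneg[OF assms(1-8)] tangent by simp_all
  then show ?thesis using linear_neg[OF has_derivative_linear[OF dg]] by simp
qed

lemma parallel_if_orthogonal_complement:
  fixes d a :: "'a::real_inner"
  assumes "a \<noteq> 0" and "\<And>\<tau>. a \<bullet> \<tau> = 0 \<Longrightarrow> d \<bullet> \<tau> = 0"
  shows "\<exists>c. d = c *\<^sub>R a"
proof -
  define \<tau> where "\<tau> = d - ((d \<bullet> a) / (a \<bullet> a)) *\<^sub>R a"
  have "a \<bullet> \<tau> = 0"
    unfolding \<tau>_def using assms(1) by (simp add: inner_diff_right inner_commute)
  then have "d \<bullet> \<tau> = 0" "a \<bullet> \<tau> = 0" using assms(2) by auto
  then have "\<tau> \<bullet> \<tau> = 0"
    unfolding \<tau>_def by (simp add: inner_diff_left)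
  then show ?thesis unfolding \<tau>_def by (metis eq_iff_diff_eq_0 inner_eq_zero_iff)
qed

lemma nearest_level_point_normal:
  fixes \<phi> :: "'a::real_inner \<Rightarrow> real"
  assumes V: "open V" "z \<in> V" "continuous_on V \<phi>"
    and d\<phi>: "(\<phi> has_derivative (\<lambda>h. a \<bullet> h)) (at z)" "a \<noteq> 0" "\<phi> z = 0"
    and nearest: "\<forall>w\<in>V. \<phi> w = 0 \<longrightarrow> dist y z \<le> dist y w"
  shows "\<exists>c. y - z = c *\<^sub>R a"
proof (rule parallel_if_orthogonal_complement[OF d\<phi>(2)])
  fix \<tau> assume \<tau>: "a \<bullet> \<tau> = 0"
  have "((\<lambda>w. (w - y) \<bullet> (w - y)) has_derivative (\<lambda>h. 2 * ((z - y) \<bullet> h))) (at z)"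
    by (auto intro!: derivative_eq_intros simp: inner_commute)
  moreover have "\<forall>w\<in>V. \<phi> w = 0 \<longrightarrow> (z - y) \<bullet> (z - y) \<le> (w - y) \<bullet> (w - y)"
    using nearest by (auto simp: dist_norm norm_minus_commute simp flip: power2_norm_eq_inner
        intro!: power_mono)
  ultimately have "2 * ((z - y) \<bullet> \<tau>) = 0"
    by (rule constrained_min_deriv_tangent[OF V d\<phi> _ _ \<tau>])
  then show "(y - z) \<bullet> \<tau> = 0"
    by (simp add: inner_diff_left)
qed

section \<open>Nearest-point projection and normal extension\<close>

text \<open>Near \<open>(p, 0)\<close>, with \<open>\<phi> p = 0\<close>, the map \<open>(z, t) \<mapsto> (z + t \<nabla>\<phi>(z), \<phi>(z))\<close> is a
  diffeomorphism; the first component of its inverse at \<open>(y, 0)\<close> is the foot point of \<open>y\<close>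
  on the level set \<open>\<phi> = 0\<close>.\<close>
definition normal_map :: "(R3 \<Rightarrow> real) \<Rightarrow> R3 \<times> real \<Rightarrow> R3 \<times> real" where
  "normal_map \<phi> x = (fst x + snd x *\<^sub>R grad \<phi> (fst x), \<phi> (fst x))"

definition normal_map_deriv :: "(R3 \<Rightarrow> real) \<Rightarrow> R3 \<times> real \<Rightarrow> R3 \<times> real \<Rightarrow> R3 \<times> real" where
  "normal_map_deriv \<phi> x h =
     (fst h + (snd x *\<^sub>R hess_apply \<phi> (fst x) (fst h) + snd h *\<^sub>R grad \<phi> (fst x)),
      grad \<phi> (fst x) \<bullet> fst h)"

lemma has_derivative_normal_map:
  assumes \<phi>: "Ck 2 \<phi> V" and x: "fst x \<in> V"
  shows "(normal_map \<phi> has_derivative normal_map_deriv \<phi> x) (at x)"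
proof -
  have dfst: "(fst has_derivative fst) (at x)" and dsnd: "(snd has_derivative snd) (at x)"
    by (auto intro: has_derivative_fst[OF has_derivative_ident] has_derivative_snd[OF has_derivative_ident])
  have dgrad: "((\<lambda>x. grad \<phi> (fst x)) has_derivative (\<lambda>h. hess_apply \<phi> (fst x) (fst h))) (at x)"
    using has_derivative_compose[OF dfst has_derivative_grad_field] Ck2_pd_differentiable[OF \<phi> x]
    by blast
  have d\<phi>: "((\<lambda>x. \<phi> (fst x)) has_derivative (\<lambda>h. grad \<phi> (fst x) \<bullet> fst h)) (at x)"
    using has_derivative_compose[OF dfst has_derivative_grad] Ck2_differentiable[OF \<phi> x] by blast
  show ?thesis
    unfolding normal_map_def[abs_def] normal_map_deriv_def[abs_def]
    by (intro has_derivative_Pair has_derivative_add dfst d\<phi> has_derivative_scaleR[OF dsnd dgrad,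
          simplified])
qed

lemma continuous_on_normal_map_deriv:
  assumes \<phi>: "Ck 2 \<phi> V"
  shows "continuous_on (V \<times> UNIV) (\<lambda>x. normal_map_deriv \<phi> x h)"
proof -
  have "continuous_on V (\<lambda>z. hess_apply \<phi> z (fst h))"
    unfolding hess_apply_def using Ck2_continuous_pd2[OF \<phi>]
    by (intro continuous_on_vec_lambda continuous_intros continuous_on_grad) auto
  then have "continuous_on (V \<times> UNIV) (\<lambda>x. hess_apply \<phi> (fst x) (fst h))"
    by (rule continuous_on_compose2[where f = fst]) (auto intro!: continuous_intros)
  moreover have "continuous_on (V \<times> UNIV) (\<lambda>x. grad \<phi> (fst x))"
    by (rule continuous_on_compose2[OF Ck2_continuous_grad[OF \<phi>]]) (auto intro!: continuous_intros)
  ultimately show ?thesis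
    unfolding normal_map_deriv_def by (intro continuous_intros) auto
qed

lemma normal_map_deriv_left_inverse:
  assumes "grad \<phi> p \<noteq> 0"
  obtains L where "bounded_linear L" "\<And>h. L (normal_map_deriv \<phi> (p, 0) h) = h"
proof
  define G where "G = grad \<phi> p"
  define L where "L y = (fst y - ((G \<bullet> fst y - snd y) / (G \<bullet> G)) *\<^sub>R G, (G \<bullet> fst y - snd y) / (G \<bullet> G))"
    for y :: "R3 \<times> real"
  have "linear L"
    unfolding L_def
    by (rule linearI) (auto simp: algebra_simps inner_add_right inner_diff_right add_divide_distrib
        diff_divide_distrib scaleR_add_left[symmetric] simp del: scaleR_add_left)
  then show "bounded_linear L" by (simp add: linear_conv_bounded_linear)
  show "L (normal_map_deriv \<phi> (p, 0) h) = h" for h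
    using assms by (simp add: L_def G_def normal_map_deriv_def inner_add_right prod_eq_iff)
qed

lemma normal_map_local_inverse:
  assumes V: "open V" and \<phi>: "Ck 2 \<phi> V" and "grad \<phi> p \<noteq> 0" and p: "p \<in> V"
  obtains U W g where "open U" "U \<subseteq> V \<times> UNIV" "(p, 0) \<in> U" "open W" "(p, \<phi> p) \<in> W"
    "\<forall>x\<in>U. normal_map \<phi> x \<in> W \<and> g (normal_map \<phi> x) = x"
    "\<forall>y\<in>W. g y \<in> U \<and> normal_map \<phi> (g y) = y"
    "\<forall>y\<in>W. g differentiable (at y)"
proof -
  define f' where "f' x = Blinfun (normal_map_deriv \<phi> x)" for x
  have f'_apply: "blinfun_apply (f' x) = normal_map_deriv \<phi> x" if "x \<in> V \<times> UNIV" for x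
  proof -
    have "bounded_linear (normal_map_deriv \<phi> x)"
      using has_derivative_bounded_linear[OF has_derivative_normal_map[OF \<phi>]] that by auto
    then show ?thesis unfolding f'_def by (rule bounded_linear_Blinfun_apply)
  qed
  have deriv: "(normal_map \<phi> has_derivative blinfun_apply (f' x)) (at x)" if "x \<in> V \<times> UNIV" for x
    using has_derivative_normal_map[OF \<phi>] f'_apply[OF that] that by auto
  have cont: "continuous_on (V \<times> UNIV) f'"
    by (rule continuous_on_blinfun_componentwise, rule continuous_on_eq,
        rule continuous_on_normal_map_deriv[OF \<phi>]) (simp add: f'_apply)
  have opn: "open (V \<times> (UNIV :: real set))" and p0: "(p, 0) \<in> V \<times> UNIV"
    using V p by (auto simp: open_Times)
  obtain L where L: "bounded_linear L" "\<And>h. L (normal_map_deriv \<phi> (p, 0) h) = h"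
    using normal_map_deriv_left_inverse[OF assms(3)] by blast
  have left_inverse: "Blinfun L o\<^sub>L f' (p, 0) = id_blinfun"
    using L f'_apply[OF p0] by (intro blinfun_eqI) (simp add: bounded_linear_Blinfun_apply)
  show thesis
  proof (rule inverse_function_theorem[OF opn deriv cont p0 left_inverse])
    fix U W g g'
    assume U: "open U" "U \<subseteq> V \<times> UNIV" "(p, 0) \<in> U" "open W" "normal_map \<phi> (p, 0) \<in> W"
      and hom: "homeomorphism U W (normal_map \<phi>) g"
      and dg: "\<And>y. y \<in> W \<Longrightarrow> (g has_derivative g' y) (at y)"
    have "(p, \<phi> p) \<in> W" using U(5) by (simp add: normal_map_def)
    moreover have "\<forall>x\<in>U. normal_map \<phi> x \<in> W \<and> g (normal_map \<phi> x) = x"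
      "\<forall>y\<in>W. g y \<in> U \<and> normal_map \<phi> (g y) = y"
      using hom unfolding homeomorphism_def by blast+
    moreover have "\<forall>y\<in>W. g differentiable (at y)"
      using dg unfolding differentiable_def by blast
    ultimately show thesis by (rule that[OF U(1-4)])
  qed
qed

lemma nearest_point_exists_locally:
  fixes S :: "'a::heine_borel set"
  assumes "closed (S \<inter> cball p R)" "p \<in> S" "dist y p < R / 2"
  shows "\<exists>z\<in>S. \<forall>w\<in>S. dist y z \<le> dist y w"
proof -
  have "0 \<le> R" using assms(3) zero_le_dist[of y p] by linarith
  then have "p \<in> S \<inter> cball p R" using assms(2) by simp
  then obtain z where z: "z \<in> S \<inter> cball p R" "\<And>w. w \<in> S \<inter> cball p R \<Longrightarrow> dist y z \<le> dist y w"
    using distance_attains_inf[OF assms(1)] by blast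
  have "dist y z \<le> dist y w" if "w \<in> S" for w
  proof (cases "w \<in> cball p R")
    case False
    then have "R < dist p w" by simp
    moreover have "dist y z \<le> dist y p" using z \<open>p \<in> S \<inter> cball p R\<close> by blast
    ultimately show ?thesis
      using assms(3) dist_triangle[of p w y] by (simp add: dist_commute)
  qed (use z that in blast)
  then show ?thesis using z(1) by blast
qed

lemma continuous_at_norm_ge_half:
  fixes f :: "'a::metric_space \<Rightarrow> 'b::real_normed_vector"
  assumes "isCont f p" "f p \<noteq> 0"
  shows "\<exists>d>0. \<forall>z. dist z p < d \<longrightarrow> norm (f p) / 2 \<le> norm (f z)"
proof -
  obtain d where d: "d > 0" "\<forall>z. dist z p < d \<longrightarrow> dist (f z) (f p) < norm (f p) / 2"
    using assms unfolding continuous_at_eps_delta by (metis half_gt_zero zero_less_norm_iff)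
  have "norm (f p) / 2 \<le> norm (f z)" if "dist z p < d" for z
  proof -
    have "norm (f p) - norm (f z) \<le> dist (f z) (f p)"
      using norm_triangle_ineq2[of "f p" "f z"] by (simp add: dist_norm norm_minus_commute)
    then show ?thesis using d(2) that by fastforce
  qed
  then show ?thesis using d(1) by blast
qed

text \<open>A nearest point \<open>z\<close> of \<open>\<Gamma>\<close> to \<open>y\<close> satisfies \<open>y = z + c \<nabla>\<phi>(z)\<close>; for \<open>y\<close> close to \<open>p\<close>
  the pair \<open>(z, c)\<close> lies where \<open>normal_map \<phi>\<close> is inverted by \<open>g\<close>.\<close>
lemma level_chart_nearest_point_unique:
  assumes chart: "level_chart \<Gamma> n V \<phi>" and p: "p \<in> \<Gamma>" "p \<in> V"
    and U: "open U" "(p, 0) \<in> U" and inverse: "\<forall>x\<in>U. g (normal_map \<phi> x) = x"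
  shows "\<exists>r>0. \<forall>y z. dist y p < r \<longrightarrow> z \<in> \<Gamma> \<longrightarrow> (\<forall>w\<in>\<Gamma>. dist y z \<le> dist y w) \<longrightarrow>
           fst (g (y, 0)) = z"
proof -
  note chart = level_chartD[OF chart]
  obtain \<rho> where \<rho>: "\<rho> > 0" "ball (p, 0) \<rho> \<subseteq> U" using U open_contains_ball by blast
  define Gp where "Gp = grad \<phi> p"
  have Gp: "norm Gp > 0" using chart(3) p(2) Gp_def by simp
  have "isCont (grad \<phi>) p"
    using Ck2_continuous_grad[OF chart(2)] chart(1) p(2) continuous_on_eq_continuous_at by blast
  then obtain \<rho>2 where \<rho>2: "\<rho>2 > 0" "\<forall>z. dist z p < \<rho>2 \<longrightarrow> norm Gp / 2 \<le> norm (grad \<phi> z)"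
    using continuous_at_norm_ge_half chart(3) p(2) unfolding Gp_def by blast
  obtain R where R: "R > 0" "ball p R \<subseteq> V" using chart(1) p(2) open_contains_ball by blast
  define m where "m = min (min R \<rho>2) (min \<rho> (\<rho> * norm Gp))"
  have m: "0 < m" "m \<le> R" "m \<le> \<rho>2" "m \<le> \<rho>" "m \<le> \<rho> * norm Gp"
    using R \<rho> \<rho>2 Gp by (auto simp: m_def)
  define r where "r = m / 4"
  have r: "r > 0" "2 * r < R" "2 * r < \<rho>2" "2 * r \<le> \<rho> / 2" "2 * r / norm Gp \<le> \<rho> / 2"
    using m Gp by (auto simp: r_def field_simps)
  have "fst (g (y, 0)) = z"
    if y: "dist y p < r" and z: "z \<in> \<Gamma>" and nearest: "\<forall>w\<in>\<Gamma>. dist y z \<le> dist y w" for y z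
  proof -
    have yz: "dist y z < r" using nearest p(1) y by (meson le_less_trans)
    have zp: "dist z p < 2 * r" using dist_triangle[of z p y] yz y by (simp add: dist_commute)
    have zV: "z \<in> V" using zp r(2) R(2) by (auto simp: dist_commute)
    have "\<phi> z = 0" using chart(4)[OF zV] z by blast
    have Gz: "norm Gp / 2 \<le> norm (grad \<phi> z)" using \<rho>2(2) zp r(3) by simp
    then have "grad \<phi> z \<noteq> 0" using Gp by auto
    moreover have "\<forall>w\<in>V. \<phi> w = 0 \<longrightarrow> dist y z \<le> dist y w" using nearest chart(4) by blast
    ultimately obtain c where c: "y - z = c *\<^sub>R grad \<phi> z"
      using nearest_level_point_normal[OF chart(1) zV Ck2_continuous_on[OF chart(2)]
          has_derivative_grad[OF Ck2_differentiable[OF chart(2) zV]]] \<open>\<phi> z = 0\<close> by blast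
    have "\<bar>c\<bar> * (norm Gp / 2) \<le> \<bar>c\<bar> * norm (grad \<phi> z)" using mult_left_mono[OF Gz abs_ge_zero] .
    also have "\<dots> = dist y z" using c by (simp add: dist_norm)
    finally have "\<bar>c\<bar> < 2 * r / norm Gp" using yz Gp by (simp add: field_simps)
    then have "dist z p + \<bar>c\<bar> < \<rho>" using zp r(4,5) by linarith
    then have "(z, c) \<in> U"
      using \<rho> sqrt_sum_squares_le_sum_abs[of "dist z p" c]
      by (auto simp: dist_Pair_Pair dist_commute intro!: set_mp[OF \<rho>(2)])
    moreover have "normal_map \<phi> (z, c) = (y, 0)"
      using c \<open>\<phi> z = 0\<close> by (simp add: normal_map_def algebra_simps)
    ultimately show ?thesis using inverse by force
  qed
  then show ?thesis using r(1) by blast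
qed

lemma level_chart_closed_cball:
  assumes chart: "level_chart \<Gamma> n V \<phi>" and R: "cball p R \<subseteq> V"
  shows "closed (\<Gamma> \<inter> cball p R)"
proof -
  have "closed {x \<in> cball p R. \<phi> x = 0}"
    using continuous_on_subset[OF Ck2_continuous_on[OF level_chartD(2)[OF chart]] R]
    by (intro continuous_closed_preimage_constant) auto
  moreover have "\<Gamma> \<inter> cball p R = {x \<in> cball p R. \<phi> x = 0}"
    using level_chartD(4)[OF chart] R by blast
  ultimately show ?thesis by simp
qed

lemma normal_map_inverse_differentiable:
  assumes "\<forall>y\<in>W. g differentiable (at y)" "(y, 0) \<in> W"
  shows "(\<lambda>y. fst (g (y, 0))) differentiable (at y)"
proof -
  have "(\<lambda>y. g (y, 0)) differentiable (at y)"
    using differentiable_chain_at[of "\<lambda>y. (y, 0)" y g] assms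
    by (simp add: o_def differentiable_Pair differentiable_ident differentiable_const)
  then show ?thesis
    using differentiable_chain_at[OF _ bounded_linear_imp_differentiable[OF bounded_linear_fst]]
    by (simp add: o_def)
qed

lemma normal_map_inverse_normal_line:
  assumes U: "open U" "(p, 0) \<in> U" and inverse: "\<forall>x\<in>U. g (normal_map \<phi> x) = x"
    and "\<phi> p = 0" "grad \<phi> p \<noteq> 0"
  shows "\<exists>e>0. \<forall>t. \<bar>t\<bar> < e \<longrightarrow> fst (g (p + t *\<^sub>R sgn (grad \<phi> p), 0)) = p"
proof -
  define G where "G = grad \<phi> p"
  obtain \<rho> where \<rho>: "\<rho> > 0" "ball (p, 0) \<rho> \<subseteq> U" using U open_contains_ball by blast
  have "fst (g (p + t *\<^sub>R sgn G, 0)) = p" if t: "\<bar>t\<bar> < \<rho> * norm G" for t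
  proof -
    have "\<bar>t / norm G\<bar> < \<rho>" using t assms(5) by (simp add: G_def field_simps)
    then have "(p, t / norm G) \<in> U" using \<rho> by (auto simp: dist_Pair_Pair dist_real_def)
    moreover have "normal_map \<phi> (p, t / norm G) = (p + t *\<^sub>R sgn G, 0)"
      using assms(4) by (simp add: normal_map_def G_def sgn_div_norm divide_inverse)
    ultimately show ?thesis using inverse by force
  qed
  moreover have "0 < \<rho> * norm G" using \<rho> assms(5) by (simp add: G_def)
  ultimately show ?thesis unfolding G_def by blast
qed

lemma level_chart_local_projection:
  assumes chart: "level_chart \<Gamma> n V \<phi>" and p: "p \<in> \<Gamma>" "p \<in> V"
  obtains r \<pi> where "0 < r"
    "\<And>y. y \<in> ball p r \<Longrightarrow> \<pi> differentiable (at y) \<and> \<pi> y \<in> \<Gamma> \<inter> V"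
    "\<And>y. y \<in> ball p r \<Longrightarrow> \<exists>z\<in>\<Gamma>. \<forall>w\<in>\<Gamma>. dist y z \<le> dist y w"
    "\<And>y z. y \<in> ball p r \<Longrightarrow> z \<in> \<Gamma> \<Longrightarrow> \<forall>w\<in>\<Gamma>. dist y z \<le> dist y w \<Longrightarrow> \<pi> y = z"
    "\<exists>e>0. \<forall>t. \<bar>t\<bar> < e \<longrightarrow> p + t *\<^sub>R n p \<in> ball p r \<and> \<pi> (p + t *\<^sub>R n p) = p"
proof -
  note chartD = level_chartD[OF chart]
  have "\<phi> p = 0" using chartD(4) p by blast
  obtain U W g where U: "open U" "U \<subseteq> V \<times> UNIV" "(p, 0) \<in> U" "open W" "(p, \<phi> p) \<in> W"
    and inverse: "\<forall>x\<in>U. normal_map \<phi> x \<in> W \<and> g (normal_map \<phi> x) = x"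
    and right_inverse: "\<forall>y\<in>W. g y \<in> U \<and> normal_map \<phi> (g y) = y"
    and dg: "\<forall>y\<in>W. g differentiable (at y)"
    by (rule normal_map_local_inverse[OF chartD(1,2) chartD(3)[OF p(2)] p(2)])
  define \<pi> where "\<pi> y = fst (g (y, 0))" for y
  have "open ((\<lambda>y::R3. (y, 0::real)) -` W)"
    using U(4) by (intro open_vimage) (auto intro!: continuous_intros)
  moreover have "p \<in> (\<lambda>y::R3. (y, 0::real)) -` W" using U(5) \<open>\<phi> p = 0\<close> by simp
  ultimately obtain r1 where r1: "r1 > 0" "ball p r1 \<subseteq> (\<lambda>y::R3. (y, 0::real)) -` W"
    using open_contains_ball by blast
  obtain r2 where r2: "r2 > 0" "\<forall>y z. dist y p < r2 \<longrightarrow> z \<in> \<Gamma> \<longrightarrow> (\<forall>w\<in>\<Gamma>. dist y z \<le> dist y w) \<longrightarrow>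
      \<pi> y = z"
    using level_chart_nearest_point_unique[OF chart p U(1,3)] inverse unfolding \<pi>_def by blast
  obtain R where R: "R > 0" "cball p R \<subseteq> V" using chartD(1) p(2) open_contains_cball by blast
  define r where "r = min (min r1 r2) (R / 2)"
  have r: "r > 0" "r \<le> r1" "r \<le> r2" "r \<le> R / 2" using r1 r2 R by (auto simp: r_def)
  show thesis
  proof (rule that[OF r(1)])
    fix y assume "y \<in> ball p r"
    then have "y \<in> ball p r1" using r(2) by simp
    then have yW: "(y, 0) \<in> W" using r1(2) by blast
    then have "g (y, 0) \<in> U" "normal_map \<phi> (g (y, 0)) = (y, 0)" using right_inverse by auto
    then have "\<pi> y \<in> V" "\<phi> (\<pi> y) = 0"
      using U(2) unfolding \<pi>_def normal_map_def by (auto simp: prod_eq_iff)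
    then show "\<pi> differentiable (at y) \<and> \<pi> y \<in> \<Gamma> \<inter> V"
      using normal_map_inverse_differentiable[OF dg yW] chartD(4) unfolding \<pi>_def by blast
  next
    fix y assume "y \<in> ball p r"
    then have "dist y p < R / 2" using r(4) by (simp add: dist_commute)
    then show "\<exists>z\<in>\<Gamma>. \<forall>w\<in>\<Gamma>. dist y z \<le> dist y w"
      by (rule nearest_point_exists_locally[OF level_chart_closed_cball[OF chart R(2)] p(1)])
  next
    fix y z assume "y \<in> ball p r" "z \<in> \<Gamma>" "\<forall>w\<in>\<Gamma>. dist y z \<le> dist y w"
    then show "\<pi> y = z" using r2(2) r(3) by (simp add: dist_commute)
  next
    have "\<forall>x\<in>U. g (normal_map \<phi> x) = x" using inverse by blast
    from normal_map_inverse_normal_line[OF U(1,3) this \<open>\<phi> p = 0\<close> chartD(3)[OF p(2)]]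
    obtain e where "e > 0" "\<forall>t. \<bar>t\<bar> < e \<longrightarrow> \<pi> (p + t *\<^sub>R n p) = p"
      unfolding \<pi>_def chartD(5)[OF p] by blast
    moreover have "norm (n p) = 1" using chartD(3,5) p by (simp add: norm_sgn)
    then have "p + t *\<^sub>R n p \<in> ball p r" if "\<bar>t\<bar> < r" for t
      using that by (simp add: dist_norm)
    ultimately show "\<exists>e>0. \<forall>t. \<bar>t\<bar> < e \<longrightarrow> p + t *\<^sub>R n p \<in> ball p r \<and> \<pi> (p + t *\<^sub>R n p) = p"
      by (intro exI[of _ "min e r"]) (auto simp: r(1))
  qed
qed

text \<open>Where \<open>y\<close> has no nearest point in \<open>\<Gamma>\<close>, \<open>nearest_point \<Gamma> y\<close> is unspecified; it is only
  used near \<open>\<Gamma>\<close>, where the nearest point exists and is unique.\<close>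
definition nearest_point :: "R3 set \<Rightarrow> R3 \<Rightarrow> R3" where
  "nearest_point \<Gamma> y = (SOME z. z \<in> \<Gamma> \<and> (\<forall>w\<in>\<Gamma>. dist y z \<le> dist y w))"

lemma nearest_point_eqI:
  assumes "\<exists>z\<in>\<Gamma>. \<forall>w\<in>\<Gamma>. dist y z \<le> dist y w"
    and "\<And>z. z \<in> \<Gamma> \<Longrightarrow> \<forall>w\<in>\<Gamma>. dist y z \<le> dist y w \<Longrightarrow> z = q"
  shows "nearest_point \<Gamma> y = q"
proof -
  have "\<exists>z. z \<in> \<Gamma> \<and> (\<forall>w\<in>\<Gamma>. dist y z \<le> dist y w)" using assms(1) by blast
  from someI_ex[OF this] show ?thesis
    unfolding nearest_point_def using assms(2) by blast
qed

lemma nearest_point_self: "x \<in> \<Gamma> \<Longrightarrow> nearest_point \<Gamma> x = x"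
  by (rule nearest_point_eqI) (force, metis dist_le_zero_iff dist_self)

lemma smooth_surface_nearest_point:
  assumes surf: "smooth_surface \<Gamma> n" and p: "p \<in> \<Gamma>" and S: "open S" "p \<in> S"
  obtains r where "r > 0"
    "\<And>y. y \<in> ball p r \<Longrightarrow> nearest_point \<Gamma> differentiable (at y) \<and> nearest_point \<Gamma> y \<in> \<Gamma> \<inter> S"
    "\<exists>e>0. \<forall>t. \<bar>t\<bar> < e \<longrightarrow> nearest_point \<Gamma> (p + t *\<^sub>R n p) = p"
proof -
  obtain V \<phi> where V: "p \<in> V" "V \<subseteq> S" and chart: "level_chart \<Gamma> n V \<phi>"
    using smooth_surface_chart[OF surf p S] by blast
  obtain r \<pi> where r: "0 < r"
    and \<pi>: "\<And>y. y \<in> ball p r \<Longrightarrow> \<pi> differentiable (at y) \<and> \<pi> y \<in> \<Gamma> \<inter> V"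
    and exists: "\<And>y. y \<in> ball p r \<Longrightarrow> \<exists>z\<in>\<Gamma>. \<forall>w\<in>\<Gamma>. dist y z \<le> dist y w"
    and unique: "\<And>y z. y \<in> ball p r \<Longrightarrow> z \<in> \<Gamma> \<Longrightarrow> \<forall>w\<in>\<Gamma>. dist y z \<le> dist y w \<Longrightarrow> \<pi> y = z"
    and normal: "\<exists>e>0. \<forall>t. \<bar>t\<bar> < e \<longrightarrow> p + t *\<^sub>R n p \<in> ball p r \<and> \<pi> (p + t *\<^sub>R n p) = p"
    using level_chart_local_projection[OF chart p V(1)] by blast
  have np: "nearest_point \<Gamma> y = \<pi> y" if "y \<in> ball p r" for y
    using nearest_point_eqI[OF exists[OF that]] unique[OF that] by metis
  show thesis
  proof (rule that[OF r])
    fix y assume y: "y \<in> ball p r"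
    have "nearest_point \<Gamma> differentiable (at y)"
      using np by (intro differentiable_transform_within_open[OF conjunct1[OF \<pi>[OF y]] _ y]) auto
    then show "nearest_point \<Gamma> differentiable (at y) \<and> nearest_point \<Gamma> y \<in> \<Gamma> \<inter> S"
      using \<pi>[OF y] np[OF y] V(2) by auto
  next
    show "\<exists>e>0. \<forall>t. \<bar>t\<bar> < e \<longrightarrow> nearest_point \<Gamma> (p + t *\<^sub>R n p) = p"
      using normal np by metis
  qed
qed

definition locally_diff_extendable :: "R3 set \<Rightarrow> (R3 \<Rightarrow> real) \<Rightarrow> bool" where
  "locally_diff_extendable \<Gamma> w \<longleftrightarrow>
     (\<forall>p\<in>\<Gamma>. \<exists>S Z. open S \<and> p \<in> S \<and> (\<forall>y\<in>S. Z differentiable (at y)) \<and> (\<forall>y\<in>\<Gamma> \<inter> S. Z y = w y))"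

lemma locally_diff_extendableE:
  assumes "locally_diff_extendable \<Gamma> w" "p \<in> \<Gamma>"
  obtains S Z where "open S" "p \<in> S" "\<forall>y\<in>S. Z differentiable (at y)" "\<forall>y\<in>\<Gamma> \<inter> S. Z y = w y"
  using bspec[OF assms(1)[unfolded locally_diff_extendable_def] assms(2)] by (elim exE conjE) blast

lemma locally_diff_extendableI:
  assumes "open U" "\<Gamma> \<subseteq> U" "\<forall>y\<in>U. Z differentiable (at y)" "\<forall>x\<in>\<Gamma>. Z x = w x"
  shows "locally_diff_extendable \<Gamma> w"
  unfolding locally_diff_extendable_def using assms by blast

lemma is_normal_ext_nearest_point:
  assumes surf: "smooth_surface \<Gamma> n" and ext: "locally_diff_extendable \<Gamma> w"
  shows "is_normal_ext \<Gamma> n w (\<lambda>y. w (nearest_point \<Gamma> y))"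
proof -
  define W where "W y = w (nearest_point \<Gamma> y)" for y
  define U where "U = \<Union>{ball p r | p r. p \<in> \<Gamma> \<and> (\<forall>y\<in>ball p r. W differentiable (at y))}"
  have "\<exists>r>0. \<forall>y\<in>ball p r. W differentiable (at y)" if p: "p \<in> \<Gamma>" for p
  proof -
    obtain S Z where S: "open S" "p \<in> S" "\<forall>y\<in>S. Z differentiable (at y)" "\<forall>y\<in>\<Gamma> \<inter> S. Z y = w y"
      by (rule locally_diff_extendableE[OF ext p])
    obtain r where r: "r > 0"
      "\<And>y. y \<in> ball p r \<Longrightarrow> nearest_point \<Gamma> differentiable (at y) \<and> nearest_point \<Gamma> y \<in> \<Gamma> \<inter> S"
      using smooth_surface_nearest_point[OF surf p S(1,2)] by metis
    have "W differentiable (at y)" if y: "y \<in> ball p r" for y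
    proof (rule differentiable_transform_within_open[OF _ _ y])
      show "(Z \<circ> nearest_point \<Gamma>) differentiable (at y)"
        using r(2)[OF y] S(3) by (intro differentiable_chain_at) auto
      show "(Z \<circ> nearest_point \<Gamma>) y' = W y'" if "y' \<in> ball p r" for y'
        using r(2)[OF that] S(4) by (simp add: W_def)
    qed simp
    then show ?thesis using r(1) by blast
  qed
  note local_diff = this
  have "\<Gamma> \<subseteq> U"
  proof
    fix p assume "p \<in> \<Gamma>"
    then obtain r where "r > 0" "\<forall>y\<in>ball p r. W differentiable (at y)"
      using local_diff by blast
    then show "p \<in> U" unfolding U_def using \<open>p \<in> \<Gamma>\<close> by (intro UnionI[of "ball p r"]) auto
  qed
  moreover have "open U" unfolding U_def by (intro open_Union) auto
  moreover have "\<forall>y\<in>U. W differentiable (at y)" unfolding U_def by blast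
  moreover have "\<forall>x\<in>\<Gamma>. \<exists>e>0. \<forall>t. \<bar>t\<bar> < e \<longrightarrow> W (x + t *\<^sub>R n x) = w x"
    using smooth_surface_nearest_point[OF surf _ open_UNIV UNIV_I] unfolding W_def by metis
  ultimately show ?thesis
    unfolding is_normal_ext_def W_def using nearest_point_self by auto
qed

lemma nrm_ext_is_normal_ext:
  assumes "smooth_surface \<Gamma> n" "locally_diff_extendable \<Gamma> w"
  shows "is_normal_ext \<Gamma> n w (nrm_ext \<Gamma> n w)"
  unfolding nrm_ext_def using is_normal_ext_nearest_point[OF assms]
  by (intro someI_ex[of "is_normal_ext \<Gamma> n w"]) blast

section \<open>Surface operators through arbitrary extensions\<close>

lemma normal_ext_grad_orthogonal:
  assumes W: "is_normal_ext \<Gamma> n w W" and x: "x \<in> \<Gamma>"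
  shows "grad W x \<bullet> n x = 0"
proof -
  obtain U e where "open U" "\<Gamma> \<subseteq> U" "\<forall>y\<in>U. W differentiable (at y)"
    and e: "e > 0" "\<forall>t. \<bar>t\<bar> < e \<longrightarrow> W (x + t *\<^sub>R n x) = w x"
    using W x unfolding is_normal_ext_def by metis
  then have "(W has_derivative (\<lambda>h. grad W x \<bullet> h)) (at (x + 0 *\<^sub>R n x))"
    using x has_derivative_grad by auto
  then have "((\<lambda>t. W (x + t *\<^sub>R n x)) has_derivative (\<lambda>s. grad W x \<bullet> (s *\<^sub>R n x))) (at 0)"
    by (rule has_derivative_compose[rotated]) (auto intro!: derivative_eq_intros)
  moreover have "((\<lambda>t. W (x + t *\<^sub>R n x)) has_derivative (\<lambda>s. 0)) (at (0::real))"
    by (rule has_derivative_transform_within_open[of "\<lambda>t. w x" _ _ UNIV "ball 0 e"])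
      (use e in auto)
  ultimately have "(\<lambda>s. grad W x \<bullet> (s *\<^sub>R n x)) = (\<lambda>s. 0)"
    by (rule has_derivative_unique)
  then show ?thesis by (metis scaleR_one)
qed

lemma grad_vanishing_on_surface:
  assumes surf: "smooth_surface \<Gamma> n" and x: "x \<in> \<Gamma>" and S: "open S" "x \<in> S"
    and F: "F differentiable (at x)" "\<forall>y\<in>\<Gamma> \<inter> S. F y = 0"
  shows "\<exists>c. grad F x = c *\<^sub>R n x"
proof -
  obtain V \<phi> where V: "x \<in> V" "V \<subseteq> S" and chart: "level_chart \<Gamma> n V \<phi>"
    using smooth_surface_chart[OF surf x S] by blast
  note chartD = level_chartD[OF chart]
  define G where "G = grad \<phi> x"
  have G: "G \<noteq> 0" "\<phi> x = 0" "n x = sgn G"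
    using chartD(3-5) x V(1) unfolding G_def by auto
  have "grad F x \<bullet> \<tau> = 0" if "G \<bullet> \<tau> = 0" for \<tau>
  proof (rule constrained_min_deriv_tangent[OF chartD(1) V(1) Ck2_continuous_on[OF chartD(2)]])
    show "(\<phi> has_derivative (\<lambda>h. G \<bullet> h)) (at x)"
      unfolding G_def using has_derivative_grad Ck2_differentiable[OF chartD(2) V(1)] by blast
    show "(F has_derivative (\<lambda>h. grad F x \<bullet> h)) (at x)"
      using has_derivative_grad[OF F(1)] .
    show "\<forall>w\<in>V. \<phi> w = 0 \<longrightarrow> F x \<le> F w"
    proof (intro ballI impI)
      fix w assume "w \<in> V" "\<phi> w = 0"
      then have "w \<in> \<Gamma> \<inter> S" using chartD(4) V(2) by blast
      then show "F x \<le> F w" using F(2) x S(2) by simp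
    qed
  qed (use G that in auto)
  then obtain c where "grad F x = c *\<^sub>R G"
    using parallel_if_orthogonal_complement[OF G(1)] by blast
  then have "grad F x = (c * norm G) *\<^sub>R n x"
    using G by (simp add: sgn_div_norm)
  then show ?thesis by blast
qed

lemma grad_normal_ext:
  assumes surf: "smooth_surface \<Gamma> n" and W: "is_normal_ext \<Gamma> n w W" and x: "x \<in> \<Gamma>"
    and S: "open S" "x \<in> S" and Z: "Z differentiable (at x)" "\<forall>y\<in>\<Gamma> \<inter> S. Z y = w y"
  shows "grad W x = grad Z x - (grad Z x \<bullet> n x) *\<^sub>R n x"
proof -
  obtain U where "\<Gamma> \<subseteq> U" "\<forall>y\<in>U. W differentiable (at y)" "\<forall>x\<in>\<Gamma>. W x = w x"
    using W unfolding is_normal_ext_def by blast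
  then have dW: "W differentiable (at x)" and "\<forall>y\<in>\<Gamma> \<inter> S. W y - Z y = 0"
    using x Z(2) by auto
  moreover have "(\<lambda>y. W y - Z y) differentiable (at x)"
    using dW Z(1) by (rule differentiable_diff)
  ultimately obtain c where "grad (\<lambda>y. W y - Z y) x = c *\<^sub>R n x"
    using grad_vanishing_on_surface[OF surf x S, of "\<lambda>y. W y - Z y"] by blast
  then have c: "grad W x = grad Z x + c *\<^sub>R n x"
    using grad_diff[OF dW Z(1)] by (simp add: algebra_simps)
  have "n x \<bullet> n x = 1"
    using smooth_surface_normal_norm[OF surf x] by (simp add: power2_norm_eq_inner[symmetric])
  then have "c = - (grad Z x \<bullet> n x)"
    using normal_ext_grad_orthogonal[OF W x] unfolding c by (simp add: inner_add_left)
  then show ?thesis using c by simp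
qed

lemma surf_grad_eq_grad_nrm_ext:
  assumes "smooth_surface \<Gamma> n" "locally_diff_extendable \<Gamma> w" "x \<in> \<Gamma>"
  shows "surf_grad \<Gamma> n w x = grad (nrm_ext \<Gamma> n w) x"
  using normal_ext_grad_orthogonal[OF nrm_ext_is_normal_ext[OF assms(1,2)] assms(3)]
  by (simp add: surf_grad_def inner_commute)

lemma surf_grad_eq:
  assumes surf: "smooth_surface \<Gamma> n" and ext: "locally_diff_extendable \<Gamma> w" and x: "x \<in> \<Gamma>"
    and S: "open S" "x \<in> S" and Z: "Z differentiable (at x)" "\<forall>y\<in>\<Gamma> \<inter> S. Z y = w y"
  shows "surf_grad \<Gamma> n w x = grad Z x - (grad Z x \<bullet> n x) *\<^sub>R n x"
  using grad_normal_ext[OF surf nrm_ext_is_normal_ext[OF surf ext] x S Z]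
    surf_grad_eq_grad_nrm_ext[OF surf ext x] by simp

lemma smooth_surface_normal_extendable:
  assumes surf: "smooth_surface \<Gamma> n"
  shows "locally_diff_extendable \<Gamma> (\<lambda>y. n y $ i)"
  unfolding locally_diff_extendable_def
proof
  fix p assume p: "p \<in> \<Gamma>"
  obtain V \<phi> where V: "p \<in> V" "V \<subseteq> UNIV" and chart: "level_chart \<Gamma> n V \<phi>"
    by (rule smooth_surface_chart[OF surf p open_UNIV UNIV_I])
  show "\<exists>S Z. open S \<and> p \<in> S \<and> (\<forall>y\<in>S. Z differentiable (at y)) \<and> (\<forall>y\<in>\<Gamma> \<inter> S. Z y = n y $ i)"
    using level_chartD(1,5)[OF chart] V(1)
      differentiable_vec_nth[OF level_chart_differentiable_normal[OF chart]]
    by (intro exI[of _ V] exI[of _ "\<lambda>y. sgn (grad \<phi> y) $ i"]) auto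
qed

lemma surf_grad_eq_ext:
  assumes surf: "smooth_surface \<Gamma> n" and U: "open U" "\<Gamma> \<subseteq> U"
    and ut: "Ck 1 ut U" "\<forall>x\<in>\<Gamma>. ut x = u x" and x: "x \<in> \<Gamma>"
  shows "surf_grad \<Gamma> n u x = grad ut x - (grad ut x \<bullet> n x) *\<^sub>R n x"
proof -
  have "\<forall>y\<in>U. ut differentiable (at y)" using Ck1_differentiable[OF ut(1)] by blast
  then show ?thesis
    using surf_grad_eq[OF surf locally_diff_extendableI[OF U _ ut(2)] x U(1)] x U(2) ut(2) by auto
qed

lemma surf_div_eq:
  assumes surf: "smooth_surface \<Gamma> n" and ext: "\<And>i. locally_diff_extendable \<Gamma> (\<lambda>y. v y $ i)"
    and x: "x \<in> \<Gamma>" and S: "open S" "x \<in> S"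
    and V: "\<And>i. (\<lambda>y. V y $ i) differentiable (at x)" "\<forall>y\<in>\<Gamma> \<inter> S. V y = v y"
  shows "surf_div \<Gamma> n v x = divg V x - jac_form V (n x) x"
proof -
  have "surf_grad \<Gamma> n (\<lambda>y. v y $ i) x
      = grad (\<lambda>y. V y $ i) x - (grad (\<lambda>y. V y $ i) x \<bullet> n x) *\<^sub>R n x" for i
    using surf_grad_eq[OF surf ext x S V(1)] V(2) by simp
  then show ?thesis
    by (simp add: surf_div_def divg_def jac_form_def inner_vec_def sum_subtractf
        sum_distrib_left mult_ac)
qed

lemma mean_curv_eq_surf_div:
  assumes surf: "smooth_surface \<Gamma> n" and x: "x \<in> \<Gamma>"
  shows "mean_curv \<Gamma> n x = - (1/2) * surf_div \<Gamma> n n x"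
  using surf_grad_eq_grad_nrm_ext[OF surf smooth_surface_normal_extendable[OF surf] x]
  by (simp add: mean_curv_def surf_div_def)

lemma level_chart_differentiable_tangential_grad:
  assumes chart: "level_chart \<Gamma> n V \<phi>" and ut: "Ck 2 ut U" and "V \<subseteq> U" and y: "y \<in> V"
  shows "(\<lambda>y. grad ut y - (grad ut y \<bullet> sgn (grad \<phi> y)) *\<^sub>R sgn (grad \<phi> y)) differentiable (at y)"
  using Ck2_differentiable_grad[OF ut] level_chart_differentiable_normal[OF chart y] assms(3) y
  by (intro differentiable_diff differentiable_scaleR differentiable_inner) auto

lemma surf_grad_locally_diff_extendable:
  assumes surf: "smooth_surface \<Gamma> n" and U: "open U" "\<Gamma> \<subseteq> U"
    and ut: "Ck 2 ut U" "\<forall>x\<in>\<Gamma>. ut x = u x"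
  shows "locally_diff_extendable \<Gamma> (\<lambda>y. surf_grad \<Gamma> n u y $ i)"
  unfolding locally_diff_extendable_def
proof
  fix p assume p: "p \<in> \<Gamma>"
  obtain V \<phi> where V: "p \<in> V" "V \<subseteq> U" and chart: "level_chart \<Gamma> n V \<phi>"
    using smooth_surface_chart[OF surf p U(1)] U(2) p by blast
  define T where "T y = grad ut y - (grad ut y \<bullet> sgn (grad \<phi> y)) *\<^sub>R sgn (grad \<phi> y)" for y
  have "\<forall>y\<in>V. (\<lambda>y. T y $ i) differentiable (at y)"
    using differentiable_vec_nth[OF level_chart_differentiable_tangential_grad[OF chart ut(1) V(2)]]
    unfolding T_def by blast
  moreover have "\<forall>y\<in>\<Gamma> \<inter> V. T y $ i = surf_grad \<Gamma> n u y $ i"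
    using surf_grad_eq_ext[OF surf U Ck2_imp_Ck1[OF ut(1)] ut(2)] level_chartD(5)[OF chart]
    by (simp add: T_def)
  ultimately show "\<exists>S Z. open S \<and> p \<in> S \<and> (\<forall>y\<in>S. Z differentiable (at y)) \<and>
      (\<forall>y\<in>\<Gamma> \<inter> S. Z y = surf_grad \<Gamma> n u y $ i)"
    using level_chartD(1)[OF chart] V(1) by blast
qed

text \<open>With \<open>N\<close> the unit normal field of a chart and \<open>q = \<langle>\<nabla>u, N\<rangle>\<close>, the field
  \<open>\<nabla>u - q N\<close> extends \<open>\<nabla>\<^sub>\<Gamma> u\<close>; the product rule splits off \<open>q (\<nabla>\<cdot>N - n\<^sup>T (\<nabla>N) n) = -2 H q\<close>.\<close>
lemma lap_beltrami_eq:
  assumes surf: "smooth_surface \<Gamma> n" and U: "open U" "\<Gamma> \<subseteq> U"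
    and ut: "Ck 2 ut U" "\<forall>x\<in>\<Gamma>. ut x = u x" and x: "x \<in> \<Gamma>"
  shows "lap_beltrami \<Gamma> n u x
    = lap ut x - hess_form ut (n x) x + 2 * mean_curv \<Gamma> n x * (n x \<bullet> grad ut x)"
proof -
  obtain V \<phi> where V: "x \<in> V" "V \<subseteq> U" and chart: "level_chart \<Gamma> n V \<phi>"
    using smooth_surface_chart[OF surf x U(1)] U(2) x by blast
  define N where "N y = sgn (grad \<phi> y)" for y
  define q where "q y = grad ut y \<bullet> N y" for y
  have xU: "x \<in> U" using V by blast
  have Nx: "N x = n x" "n x \<bullet> n x = 1"
    using level_chartD(5)[OF chart x V(1)] smooth_surface_normal_norm[OF surf x]
    by (simp_all add: N_def power2_norm_eq_inner[symmetric])
  have dN: "N differentiable (at x)"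
    unfolding N_def by (rule level_chart_differentiable_normal[OF chart V(1)])
  have dgrad: "grad ut differentiable (at x)" by (rule Ck2_differentiable_grad[OF ut(1) xU])
  have dq: "q differentiable (at x)"
    unfolding q_def using dgrad dN by (rule differentiable_inner)
  have dqN: "(\<lambda>y. q y *\<^sub>R N y) differentiable (at x)"
    using dq dN by (rule differentiable_scaleR)
  have "lap_beltrami \<Gamma> n u x = divg (\<lambda>y. grad ut y - q y *\<^sub>R N y) x
      - jac_form (\<lambda>y. grad ut y - q y *\<^sub>R N y) (n x) x"
    unfolding lap_beltrami_def
  proof (rule surf_div_eq[OF surf surf_grad_locally_diff_extendable[OF surf U ut] x
        level_chartD(1)[OF chart] V(1)])
    show "(\<lambda>y. (grad ut y - q y *\<^sub>R N y) $ i) differentiable (at x)" for i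
      using differentiable_vec_nth[OF differentiable_diff[OF dgrad dqN]] by simp
    show "\<forall>y\<in>\<Gamma> \<inter> V. grad ut y - q y *\<^sub>R N y = surf_grad \<Gamma> n u y"
      using surf_grad_eq_ext[OF surf U Ck2_imp_Ck1[OF ut(1)] ut(2)] level_chartD(5)[OF chart]
      by (simp add: q_def N_def)
  qed
  also have "\<dots> = lap ut x - hess_form ut (n x) x - q x * (divg N x - jac_form N (n x) x)"
    using differentiable_vec_nth[OF dgrad] differentiable_vec_nth[OF dqN]
      differentiable_vec_nth[OF dN] dq Nx
    by (simp add: divg_diff jac_form_diff divg_scaleR jac_form_scaleR divg_grad jac_form_grad
        algebra_simps)
  also have "divg N x - jac_form N (n x) x = surf_div \<Gamma> n n x"
    using level_chartD(5)[OF chart] differentiable_vec_nth[OF dN]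
    by (intro surf_div_eq[OF surf smooth_surface_normal_extendable[OF surf] x
          level_chartD(1)[OF chart] V(1), symmetric]) (auto simp: N_def)
  finally show ?thesis
    using mean_curv_eq_surf_div[OF surf x] Nx(1) by (simp add: q_def inner_commute)
qed

section \<open>The \<open>L\<^sup>2\<close> estimates\<close>

lemma surf_grad_L2_estimate:
  assumes surf: "smooth_surface \<Gamma> n" and U: "open U" "\<Gamma> \<subseteq> U"
    and ut: "Ck 1 ut U" "\<forall>x\<in>\<Gamma>. ut x = u x"
  shows "L2norm \<Gamma> (\<lambda>x. surf_grad \<Gamma> n u x - f x)
    \<le> L2norm \<Gamma> (\<lambda>x. grad ut x - f x) + L2norm \<Gamma> (\<lambda>x. n x \<bullet> grad ut x)"
proof (rule L2norm_triangle)
  show "\<forall>x\<in>\<Gamma>. norm (surf_grad \<Gamma> n u x - f x) \<le> norm (grad ut x - f x) + norm (n x \<bullet> grad ut x)"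
  proof
    fix x assume x: "x \<in> \<Gamma>"
    have "surf_grad \<Gamma> n u x - f x = (grad ut x - f x) - (n x \<bullet> grad ut x) *\<^sub>R n x"
      using surf_grad_eq_ext[OF surf U ut x] by (simp add: inner_commute algebra_simps)
    also have "norm \<dots> \<le> norm (grad ut x - f x) + norm ((n x \<bullet> grad ut x) *\<^sub>R n x)"
      by (rule norm_triangle_ineq4)
    finally show "norm (surf_grad \<Gamma> n u x - f x) \<le> norm (grad ut x - f x) + norm (n x \<bullet> grad ut x)"
      using smooth_surface_normal_norm[OF surf x] by simp
  qed
  have "continuous_on \<Gamma> (grad ut)"
    using continuous_on_grad[OF Ck1_continuous_pd[OF ut(1)]] U(2) by (rule continuous_on_subset)
  then show "(\<lambda>x. norm (n x \<bullet> grad ut x)) \<in> borel_measurable (surface_measure \<Gamma>)"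
    using smooth_surface_continuous_normal[OF surf]
    by (intro continuous_on_imp_measurable_surface continuous_intros)
qed

lemma surf_div_L2_estimate:
  assumes surf: "smooth_surface \<Gamma> n" and U: "open U" "\<Gamma> \<subseteq> U"
    and vt: "\<forall>i. Ck 1 (\<lambda>y. vt y $ i) U" "\<forall>x\<in>\<Gamma>. vt x = v x"
  shows "L2norm \<Gamma> (\<lambda>x. surf_div \<Gamma> n v x - g x)
    \<le> L2norm \<Gamma> (\<lambda>x. divg vt x - g x) + L2norm \<Gamma> (\<lambda>x. jac_form vt (n x) x)"
proof (rule L2norm_triangle)
  have dvt: "\<forall>y\<in>U. (\<lambda>y. vt y $ i) differentiable (at y)" for i
    using Ck1_differentiable vt(1) by blast
  have "surf_div \<Gamma> n v x = divg vt x - jac_form vt (n x) x" if x: "x \<in> \<Gamma>" for x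
    using vt(2) x U dvt
    by (intro surf_div_eq[OF surf locally_diff_extendableI[OF U dvt] x U(1)]) auto
  then show "\<forall>x\<in>\<Gamma>. norm (surf_div \<Gamma> n v x - g x) \<le> norm (divg vt x - g x) + norm (jac_form vt (n x) x)"
    by auto
  have "continuous_on \<Gamma> (pd j (\<lambda>y. vt y $ i))" for i j
    using Ck1_continuous_pd vt(1) U(2) by (blast intro: continuous_on_subset)
  then show "(\<lambda>x. norm (jac_form vt (n x) x)) \<in> borel_measurable (surface_measure \<Gamma>)"
    unfolding jac_form_def using smooth_surface_continuous_normal[OF surf]
    by (intro continuous_on_imp_measurable_surface continuous_intros) auto
qed

lemma ennreal_add_mult_le_mult_add:
  fixes a b d :: ennreal
  assumes "1 \<le> c"
  shows "a + (ennreal c * b + d) \<le> ennreal c * (a + b + d)"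
proof -
  have "1 \<le> ennreal c" using assms by simp
  then have "a \<le> ennreal c * a" "d \<le> ennreal c * d"
    using mult_right_mono[of 1 "ennreal c"] by auto
  then have "a + (ennreal c * b + d) \<le> ennreal c * a + (ennreal c * b + ennreal c * d)"
    by (intro add_mono) auto
  then show ?thesis by (simp add: distrib_left add.assoc)
qed

lemma lap_beltrami_L2_estimate:
  assumes surf: "smooth_surface \<Gamma> n" and H: "bounded (mean_curv \<Gamma> n ` \<Gamma>)"
    and U: "open U" "\<Gamma> \<subseteq> U" and ut: "Ck 2 ut U" "\<forall>x\<in>\<Gamma>. ut x = u x"
  shows "L2norm \<Gamma> (\<lambda>x. lap_beltrami \<Gamma> n u x - g x)
    \<le> ennreal (max 1 (2 * (SUP x\<in>\<Gamma>. \<bar>mean_curv \<Gamma> n x\<bar>)))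
       * (L2norm \<Gamma> (\<lambda>x. lap ut x - g x) + L2norm \<Gamma> (\<lambda>x. n x \<bullet> grad ut x)
          + L2norm \<Gamma> (\<lambda>x. hess_form ut (n x) x))"
proof -
  define c where "c = max 1 (2 * (SUP x\<in>\<Gamma>. \<bar>mean_curv \<Gamma> n x\<bar>))"
  have c: "1 \<le> c" unfolding c_def by simp
  have "bdd_above ((\<lambda>x. \<bar>mean_curv \<Gamma> n x\<bar>) ` \<Gamma>)"
    using H unfolding bounded_iff by (auto intro: bdd_aboveI2)
  then have H_le: "2 * \<bar>mean_curv \<Gamma> n x\<bar> \<le> c" if "x \<in> \<Gamma>" for x
    using cSUP_upper[OF that] unfolding c_def by fastforce
  define q where "q x = n x \<bullet> grad ut x" for x
  define h where "h x = hess_form ut (n x) x" for x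
  have q_meas: "q \<in> borel_measurable (surface_measure \<Gamma>)"
    unfolding q_def using smooth_surface_continuous_normal[OF surf]
      continuous_on_subset[OF Ck2_continuous_grad[OF ut(1)] U(2)]
    by (intro continuous_on_imp_measurable_surface continuous_intros)
  have h_meas: "h \<in> borel_measurable (surface_measure \<Gamma>)"
    unfolding h_def hess_form_def
    using smooth_surface_continuous_normal[OF surf] continuous_on_subset[OF Ck2_continuous_pd2[OF ut(1)] U(2)]
    by (intro continuous_on_imp_measurable_surface continuous_intros)
  have "L2norm \<Gamma> (\<lambda>x. lap_beltrami \<Gamma> n u x - g x)
      \<le> L2norm \<Gamma> (\<lambda>x. lap ut x - g x) + L2norm \<Gamma> (\<lambda>x. c * \<bar>q x\<bar> + \<bar>h x\<bar>)"
  proof (rule L2norm_triangle)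
    show "\<forall>x\<in>\<Gamma>. norm (lap_beltrami \<Gamma> n u x - g x) \<le> norm (lap ut x - g x) + norm (c * \<bar>q x\<bar> + \<bar>h x\<bar>)"
    proof
      fix x assume x: "x \<in> \<Gamma>"
      have "\<bar>2 * mean_curv \<Gamma> n x * q x\<bar> \<le> c * \<bar>q x\<bar>"
        using mult_right_mono[OF H_le[OF x] abs_ge_zero[of "q x"]] by (simp add: abs_mult)
      then show "norm (lap_beltrami \<Gamma> n u x - g x) \<le> norm (lap ut x - g x) + norm (c * \<bar>q x\<bar> + \<bar>h x\<bar>)"
        using lap_beltrami_eq[OF surf U ut x] c unfolding q_def h_def by simp
    qed
    show "(\<lambda>x. norm (c * \<bar>q x\<bar> + \<bar>h x\<bar>)) \<in> borel_measurable (surface_measure \<Gamma>)"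
      using q_meas h_meas by measurable
  qed
  also have "L2norm \<Gamma> (\<lambda>x. c * \<bar>q x\<bar> + \<bar>h x\<bar>) \<le> L2norm \<Gamma> (\<lambda>x. c * q x) + L2norm \<Gamma> h"
    using c h_meas by (intro L2norm_triangle) (auto simp: abs_mult)
  also have "L2norm \<Gamma> (\<lambda>x. c * q x) = ennreal c * L2norm \<Gamma> q"
    using c q_meas by (intro L2norm_mult) auto
  finally show ?thesis
    using order_trans[OF _ ennreal_add_mult_le_mult_add[OF c]] unfolding c_def q_def h_def
    by (simp add: add.assoc)
qed

theorem theorem2p1:
  fixes \<Gamma> U :: "R3 set" and n v f vt :: "R3 \<Rightarrow> R3" and u g ut :: "R3 \<Rightarrow> real"
  assumes surf: "smooth_surface \<Gamma> n"
    and unit: "\<forall>x\<in>\<Gamma>. norm (n x) = 1"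
    and Hbdd: "bounded ((\<lambda>x. mean_curv \<Gamma> n x) ` \<Gamma>)"
    and U: "open U" "\<Gamma> \<subseteq> U"
    and ut: "Ck 2 ut U" "\<forall>x\<in>\<Gamma>. ut x = u x"
    and vt: "\<forall>i. Ck 1 (\<lambda>y. vt y $ i) U" "\<forall>x\<in>\<Gamma>. vt x = v x"
  shows "(L2norm \<Gamma> (\<lambda>x. surf_grad \<Gamma> n u x - f x)
           \<le> L2norm \<Gamma> (\<lambda>x. grad ut x - f x) + L2norm \<Gamma> (\<lambda>x. n x \<bullet> grad ut x))
     \<and> (L2norm \<Gamma> (\<lambda>x. surf_div \<Gamma> n v x - g x)
           \<le> L2norm \<Gamma> (\<lambda>x. divg vt x - g x) + L2norm \<Gamma> (\<lambda>x. jac_form vt (n x) x))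
     \<and> (L2norm \<Gamma> (\<lambda>x. lap_beltrami \<Gamma> n u x - g x)
           \<le> ennreal (max 1 (2 * (SUP x\<in>\<Gamma>. \<bar>mean_curv \<Gamma> n x\<bar>)))
              * (L2norm \<Gamma> (\<lambda>x. lap ut x - g x) + L2norm \<Gamma> (\<lambda>x. n x \<bullet> grad ut x)
                 + L2norm \<Gamma> (\<lambda>x. hess_form ut (n x) x)))"
  using surf_grad_L2_estimate[OF surf U Ck2_imp_Ck1[OF ut(1)] ut(2)]
    surf_div_L2_estimate[OF surf U vt] lap_beltrami_L2_estimate[OF surf Hbdd U ut]
  by blast

end
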